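(* Let $f=p/q$ be a rational function with $p,q$ of degree $l$, positive on the standard simplex $\Delta$ with $\underline f=\min_\Delta f>0$, and assume the denominator Bernstein coefficients of degree $l$ are positive on $\Delta$ and on every subsimplex considered. Let $S$ be a subdivision scheme with shrinking factor $C<1$ and $N$ an integer such that \[ \frac{1}{C^N}>\frac{\sqrt{2\omega'}}{\sqrt{\underline f}}. \] Then $f$ satisfies the local certificate of positivity associated to $S^N(\Delta)$, i.e. for every subsimplex $V$ of $S^N(\Delta)$, $b_\alpha(f,l,V)\ge0$ for all $|\alpha|=l$ and $b_{l\hat e_i}(f,l,V)>0$ for $i=0,\dots,n$.
   Context: For a nondegenerate simplex $V=[v_0,\dots,v_n]\subset\mathbb{R}^n$ with barycentric coordinates $\lambda_0,\dots,\lambda_n$, the Bernstein polynomials of degree $k$ are $B^{(k)}_\alpha=\frac{k!}{\alpha_0!\cdots\alpha_n!}\lambda^\alpha$, $\alpha\in\mathbb{N}^{n+1}$, $|\alpha|=k$; $b_\alpha(p,k,V)$ are the coefficients of $p$ in this basis; $b_\alpha(f,k,V)=b_\alpha(p,k,V)/b_\alpha(q,k,V)$. $\Delta$ is the standard simplex; $\hat e_i$ are unit vectors of $\mathbb{R}^{n+1}$. A subdivision scheme $S$ maps a simplex to a family of simplices whose union is it and whose interiors are disjoint; $S^N(\Delta)$ is the result of $N$ successive steps; $S$ has shrinking factor $0<C<1$ if for every simplex $U$ the largest diameter among the simplices of $S(U)$ is at most $C$ times the diameter of $U$. The constant is $\omega':=l\,\frac{n^2(n+1)(n+2)^2(n+3)}{576\,\min_{|\alpha|=l}b_\alpha(q,l,\Delta)}\big(\|\nabla^2p\|_\infty+\zeta\|\nabla^2q\|_\infty\big)$,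 with $\zeta:=\max\{|\min_{|\alpha|=l}b_\alpha(f,l,\Delta)|,|\max_{|\alpha|=l}b_\alpha(f,l,\Delta)|\}$ and, with convention $\hat e_{-1}:=\hat e_n$, $\|\nabla^2p\|_\infty=\max_{|\gamma|=l-2,0\le i<j\le n}|b_{\gamma+\hat e_i+\hat e_{j-1}}+b_{\gamma+\hat e_{i-1}+\hat e_j}-b_{\gamma+\hat e_{i-1}+\hat e_{j-1}}-b_{\gamma+\hat e_i+\hat e_j}|$ for $b=b(p,l,\Delta)$, likewise for $q$. *)

theory Defs
  imports Complex_Main
begin

text \<open>Points of R^n are represented as functions nat => real whose coordinates
  at indices >= n vanish; coordinate k (0-based) is x k.  A simplex
  [v_0,...,v_n] is a function nat => point, only indices 0..n matter.
  Multi-indices alpha in N^{n+1} are functions nat => nat vanishing above n.\<close>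

type_synonym pt = "nat \<Rightarrow> real"
type_synonym smplx = "nat \<Rightarrow> pt"
type_synonym midx = "nat \<Rightarrow> nat"

definition in_Rn :: "nat \<Rightarrow> pt \<Rightarrow> bool" where
  "in_Rn n x \<longleftrightarrow> (\<forall>k\<ge>n. x k = 0)"

definition dist_n :: "nat \<Rightarrow> pt \<Rightarrow> pt \<Rightarrow> real" where
  "dist_n n x y = sqrt (\<Sum>k<n. (x k - y k)^2)"

definition diam_n :: "nat \<Rightarrow> pt set \<Rightarrow> real" where
  "diam_n n A = Sup {dist_n n x y | x y. x \<in> A \<and> y \<in> A}"

definition nondeg_simplex :: "nat \<Rightarrow> smplx \<Rightarrow> bool" where
  "nondeg_simplex n V \<longleftrightarrow> (\<forall>i\<le>n. in_Rn n (V i)) \<and>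
     (\<forall>c::nat\<Rightarrow>real. (\<Sum>i\<le>n. c i) = 0 \<and> (\<forall>k. (\<Sum>i\<le>n. c i * V i k) = 0)
        \<longrightarrow> (\<forall>i\<le>n. c i = 0))"

definition bary :: "nat \<Rightarrow> smplx \<Rightarrow> pt \<Rightarrow> (nat \<Rightarrow> real)" where
  "bary n V x = (THE lam. (\<forall>i>n. lam i = 0) \<and> (\<Sum>i\<le>n. lam i) = 1 \<and>
                    (\<forall>k. (\<Sum>i\<le>n. lam i * V i k) = x k))"

definition simplex_set :: "nat \<Rightarrow> smplx \<Rightarrow> pt set" where
  "simplex_set n V = {x. \<exists>mu::nat\<Rightarrow>real. (\<forall>i\<le>n. mu i \<ge> 0) \<and> (\<Sum>i\<le>n. mu i) = 1 \<and>
                        x = (\<lambda>k. \<Sum>i\<le>n. mu i * V i k)}"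

definition simplex_interior :: "nat \<Rightarrow> smplx \<Rightarrow> pt set" where
  "simplex_interior n V = {x. in_Rn n x \<and> (\<forall>i\<le>n. bary n V x i > 0)}"

definition diam_simplex :: "nat \<Rightarrow> smplx \<Rightarrow> real" where
  "diam_simplex n V = diam_n n (simplex_set n V)"

definition std_simplex :: "smplx" where
  "std_simplex i = (if i = 0 then (\<lambda>k. 0) else (\<lambda>k. if k = i - 1 then 1 else 0))"

definition multi_idx :: "nat \<Rightarrow> nat \<Rightarrow> midx set" where
  "multi_idx n k = {\<alpha>. (\<forall>i>n. \<alpha> i = 0) \<and> (\<Sum>i\<le>n. \<alpha> i) = k}"

definition bernstein :: "nat \<Rightarrow> nat \<Rightarrow> midx \<Rightarrow> (nat \<Rightarrow> real) \<Rightarrow> real" where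
  "bernstein n k \<alpha> lam = fact k / (\<Prod>i\<le>n. fact (\<alpha> i)) * (\<Prod>i\<le>n. lam i ^ \<alpha> i)"

definition is_poly :: "nat \<Rightarrow> nat \<Rightarrow> (pt \<Rightarrow> real) \<Rightarrow> bool" where
  "is_poly n l p \<longleftrightarrow> (\<exists>c::midx \<Rightarrow> real. \<forall>x. in_Rn n x \<longrightarrow>
     p x = (\<Sum>\<alpha>\<in>{\<alpha>. (\<forall>i\<ge>n. \<alpha> i = 0) \<and> (\<Sum>i<n. \<alpha> i) \<le> l}. c \<alpha> * (\<Prod>i<n. x i ^ \<alpha> i)))"

definition bcoef :: "nat \<Rightarrow> (pt \<Rightarrow> real) \<Rightarrow> nat \<Rightarrow> smplx \<Rightarrow> midx \<Rightarrow> real" where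
  "bcoef n p k V = (THE b. (\<forall>\<alpha>. \<alpha> \<notin> multi_idx n k \<longrightarrow> b \<alpha> = 0) \<and>
      (\<forall>x. in_Rn n x \<longrightarrow> p x = (\<Sum>\<alpha>\<in>multi_idx n k. b \<alpha> * bernstein n k \<alpha> (bary n V x))))"

definition bcoef_rat :: "nat \<Rightarrow> (pt \<Rightarrow> real) \<Rightarrow> (pt \<Rightarrow> real) \<Rightarrow> nat \<Rightarrow> smplx \<Rightarrow> midx \<Rightarrow> real" where
  "bcoef_rat n p q k V \<alpha> = bcoef n p k V \<alpha> / bcoef n q k V \<alpha>"

definition ehat :: "nat \<Rightarrow> midx" where
  "ehat i = (\<lambda>k. if k = i then 1 else 0)"

definition madd3 :: "midx \<Rightarrow> midx \<Rightarrow> midx \<Rightarrow> midx" where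
  "madd3 a b c = (\<lambda>k. a k + b k + c k)"

definition prev_idx :: "nat \<Rightarrow> nat \<Rightarrow> nat" where
  "prev_idx n i = (if i = 0 then n else i - 1)"

text \<open>||nabla^2 p||_infty computed from b = b(p,l,Delta)\<close>
definition hess_norm :: "nat \<Rightarrow> nat \<Rightarrow> (pt \<Rightarrow> real) \<Rightarrow> real" where
  "hess_norm n l p = Max (insert 0
     {\<bar>bcoef n p l std_simplex (madd3 \<gamma> (ehat i) (ehat (prev_idx n j)))
       + bcoef n p l std_simplex (madd3 \<gamma> (ehat (prev_idx n i)) (ehat j))
       - bcoef n p l std_simplex (madd3 \<gamma> (ehat (prev_idx n i)) (ehat (prev_idx n j)))
       - bcoef n p l std_simplex (madd3 \<gamma> (ehat i) (ehat j))\<bar>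
      | \<gamma> i j. \<gamma> \<in> multi_idx n (l - 2) \<and> i < j \<and> j \<le> n})"

definition omega' :: "nat \<Rightarrow> nat \<Rightarrow> (pt \<Rightarrow> real) \<Rightarrow> (pt \<Rightarrow> real) \<Rightarrow> real" where
  "omega' n l p q =
    (let bf = bcoef_rat n p q l std_simplex ` multi_idx n l;
         \<zeta> = max \<bar>Min bf\<bar> \<bar>Max bf\<bar>
     in real l * (real n ^ 2 * real (n + 1) * real (n + 2) ^ 2 * real (n + 3))
        / (576 * Min (bcoef n q l std_simplex ` multi_idx n l))
        * (hess_norm n l p + \<zeta> * hess_norm n l q))"

definition subdivision_scheme :: "nat \<Rightarrow> (smplx \<Rightarrow> smplx set) \<Rightarrow> bool" where
  "subdivision_scheme n S \<longleftrightarrow> (\<forall>U. nondeg_simplex n U \<longrightarrow>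
      (\<forall>W\<in>S U. nondeg_simplex n W) \<and>
      (\<Union>W\<in>S U. simplex_set n W) = simplex_set n U \<and>
      (\<forall>W\<in>S U. \<forall>W'\<in>S U. W \<noteq> W' \<longrightarrow> simplex_interior n W \<inter> simplex_interior n W' = {}))"

definition shrinking_factor :: "nat \<Rightarrow> (smplx \<Rightarrow> smplx set) \<Rightarrow> real \<Rightarrow> bool" where
  "shrinking_factor n S C \<longleftrightarrow> 0 < C \<and> C < 1 \<and>
     (\<forall>U. nondeg_simplex n U \<longrightarrow> (\<forall>W\<in>S U. diam_simplex n W \<le> C * diam_simplex n U))"

fun subdiv_iter :: "(smplx \<Rightarrow> smplx set) \<Rightarrow> nat \<Rightarrow> smplx \<Rightarrow> smplx set" where
  "subdiv_iter S 0 V = {V}"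
| "subdiv_iter S (Suc N) V = (\<Union>W\<in>subdiv_iter S N V. S W)"

end

theory Submission
  imports Defs "Jordan_Normal_Form.Determinant" "HOL-Library.Multiset" "HOL-Library.FuncSet"
    "HOL-Computational_Algebra.Polynomial"
begin

text \<open>The Bernstein coefficients of a polynomial on a subsimplex \<open>V \<subseteq> \<Delta>\<close> are values of its
  blossom (polar form) at the vertices of \<open>V\<close>, repeated according to \<open>\<alpha>\<close>. Let \<open>y \<in> V\<close> have
  barycentric coordinates \<open>\<alpha>/l\<close> and \<open>\<phi> = f(y) \<ge> f_min\<close>. Then \<open>p - \<phi> q\<close> vanishes at \<open>y\<close>,
  i.e. its blossom vanishes on the diagonal at the centroid of the arguments, and an averaging argument
  bounds the blossom at the actual arguments by the second differences of its coefficients on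
  \<open>\<Delta>\<close> times the scatter of the vertices of \<open>V\<close>, hence by a multiple of
  \<open>diam(V)\<^sup>2 \<le> C\<^sup>2\<^sup>N diam(\<Delta>)\<^sup>2\<close>. Dividing by the blossom of \<open>q\<close>, which is at least the
  smallest coefficient of \<open>q\<close> on \<open>\<Delta>\<close>, gives \<open>b\<^sub>\<alpha>(f,l,V) \<ge> f(y) - 2 \<omega>' C\<^sup>2\<^sup>N > 0\<close>.\<close>

section \<open>Multi-indices and Bernstein polynomials\<close>

definition add_unit :: "midx \<Rightarrow> nat \<Rightarrow> midx" where
  "add_unit \<beta> i = (\<lambda>k. \<beta> k + ehat i k)"

lemma multi_idx_finite: "finite (multi_idx n l)"
proof -
  have "multi_idx n l \<subseteq> (\<lambda>f. \<lambda>i. if i \<le> n then f i else 0) ` (PiE {..n} (\<lambda>_. {..l}))"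
  proof
    fix \<beta> assume b: "\<beta> \<in> multi_idx n l"
    hence le: "\<beta> i \<le> l" if "i \<le> n" for i
      using that member_le_sum[of i "{..n}" \<beta>] by (auto simp: multi_idx_def)
    have "\<beta> = (\<lambda>i. if i \<le> n then restrict \<beta> {..n} i else 0)"
      using b by (auto simp: multi_idx_def fun_eq_iff restrict_def)
    moreover have "restrict \<beta> {..n} \<in> PiE {..n} (\<lambda>_. {..l})" using le by auto
    ultimately show "\<beta> \<in> (\<lambda>f. \<lambda>i. if i \<le> n then f i else 0) ` (PiE {..n} (\<lambda>_. {..l}))"
      by blast
  qed
  thus ?thesis by (rule finite_subset) (auto intro: finite_PiE)
qed

lemma sum_ehat: "i \<le> n \<Longrightarrow> (\<Sum>k\<le>n. ehat i k) = 1"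
  by (simp add: ehat_def)

lemma add_unit_multi_idx: "\<beta> \<in> multi_idx n l \<Longrightarrow> i \<le> n \<Longrightarrow> add_unit \<beta> i \<in> multi_idx n (Suc l)"
  by (auto simp: multi_idx_def add_unit_def sum.distrib ehat_def)

lemma bary_mult_bernstein:
  assumes "i \<le> n"
  shows "w i * bernstein n l \<beta> w = (real (\<beta> i) + 1) / (real l + 1) * bernstein n (Suc l) (add_unit \<beta> i) w"
proof -
  have fact_prod: "(\<Prod>j\<le>n. fact (add_unit \<beta> i j) :: real) = (real (\<beta> i) + 1) * (\<Prod>j\<le>n. fact (\<beta> j))"
  proof -
    have "(\<Prod>j\<le>n. fact (add_unit \<beta> i j) :: real) = fact (add_unit \<beta> i i) * (\<Prod>j\<in>{..n}-{i}. fact (add_unit \<beta> i j))"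
      using assms by (subst prod.remove[of _ i]) auto
    also have "(\<Prod>j\<in>{..n}-{i}. fact (add_unit \<beta> i j) :: real) = (\<Prod>j\<in>{..n}-{i}. fact (\<beta> j))"
      by (rule prod.cong) (auto simp: add_unit_def ehat_def)
    also have "fact (add_unit \<beta> i i) = (real (\<beta> i) + 1) * (fact (\<beta> i) :: real)"
      by (simp add: add_unit_def ehat_def)
    also have "(real (\<beta> i) + 1) * fact (\<beta> i) * (\<Prod>j\<in>{..n}-{i}. fact (\<beta> j)) =
        (real (\<beta> i) + 1) * (\<Prod>j\<le>n. fact (\<beta> j) :: real)"
      using assms by (subst (2) prod.remove[of _ i]) auto
    finally show ?thesis .
  qed
  have pow_prod: "(\<Prod>j\<le>n. w j ^ add_unit \<beta> i j) = w i * (\<Prod>j\<le>n. w j ^ \<beta> j)"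
  proof -
    have "(\<Prod>j\<le>n. w j ^ add_unit \<beta> i j) = w i ^ add_unit \<beta> i i * (\<Prod>j\<in>{..n}-{i}. w j ^ add_unit \<beta> i j)"
      using assms by (subst prod.remove[of _ i]) auto
    also have "(\<Prod>j\<in>{..n}-{i}. w j ^ add_unit \<beta> i j) = (\<Prod>j\<in>{..n}-{i}. w j ^ \<beta> j)"
      by (rule prod.cong) (auto simp: add_unit_def ehat_def)
    also have "w i ^ add_unit \<beta> i i = w i ^ Suc (\<beta> i)" by (simp add: add_unit_def ehat_def)
    finally have "(\<Prod>j\<le>n. w j ^ add_unit \<beta> i j) = w i ^ Suc (\<beta> i) * (\<Prod>j\<in>{..n}-{i}. w j ^ \<beta> j)" .
    also have "\<dots> = w i * (w i ^ \<beta> i * (\<Prod>j\<in>{..n}-{i}. w j ^ \<beta> j))" by simp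
    also have "w i ^ \<beta> i * (\<Prod>j\<in>{..n}-{i}. w j ^ \<beta> j) = (\<Prod>j\<le>n. w j ^ \<beta> j)"
      using assms by (subst (2) prod.remove[of _ i]) auto
    finally show ?thesis .
  qed
  have pos: "(\<Prod>j\<le>n. fact (\<beta> j) :: real) > 0" by (rule prod_pos) auto
  have fs: "(fact (Suc l) :: real) = (real l + 1) * fact l" by (simp add: algebra_simps)
  have rearrange: "w * (F / P * Q) = (b + 1) / (L + 1) * ((L + 1) * F / ((b + 1) * P) * (w * Q))"
    if "P > 0" "b \<ge> 0" "L \<ge> 0" for w F P Q b L :: real
  proof -
    have "(b + 1) / (L + 1) * ((L + 1) * F / ((b + 1) * P)) = F / P"
      using that by (simp add: divide_simps)
    then show ?thesis by (metis mult.assoc mult.left_commute)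
  qed
  show ?thesis
    unfolding bernstein_def fact_prod pow_prod fs using pos
    by (rule rearrange) auto
qed

definition sub_unit :: "midx \<Rightarrow> nat \<Rightarrow> midx" where
  "sub_unit \<beta> i = (\<lambda>k. \<beta> k - ehat i k)"

lemma sum_multi_idx_add_unit:
  assumes "i \<le> n"
  shows "(\<Sum>\<beta>\<in>multi_idx n l. h (add_unit \<beta> i)) = (\<Sum>\<beta>'\<in>{\<beta>'\<in>multi_idx n (Suc l). \<beta>' i > 0}. h \<beta>')"
proof (rule sum.reindex_bij_witness[where i = "\<lambda>\<beta>'. sub_unit \<beta>' i" and j = "\<lambda>\<beta>. add_unit \<beta> i"])
  fix \<beta> assume "\<beta> \<in> multi_idx n l"
  thus "sub_unit (add_unit \<beta> i) i = \<beta>" by (auto simp: sub_unit_def add_unit_def fun_eq_iff)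
  show "add_unit \<beta> i \<in> {\<beta>' \<in> multi_idx n (Suc l). 0 < \<beta>' i}"
    using \<open>\<beta> \<in> multi_idx n l\<close> assms add_unit_multi_idx[of \<beta> n l i] by (auto simp: add_unit_def ehat_def)
next
  fix \<beta>' assume b: "\<beta>' \<in> {\<beta>' \<in> multi_idx n (Suc l). 0 < \<beta>' i}"
  thus "add_unit (sub_unit \<beta>' i) i = \<beta>'" by (auto simp: sub_unit_def add_unit_def fun_eq_iff ehat_def)
  have "(\<Sum>k\<le>n. \<beta>' k - ehat i k) = (\<Sum>k\<le>n. \<beta>' k) - (\<Sum>k\<le>n. ehat i k)"
    using b by (intro sum_subtractf_nat) (auto simp: ehat_def)
  thus "sub_unit \<beta>' i \<in> multi_idx n l" using b assms
    by (auto simp: multi_idx_def sub_unit_def sum_ehat)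
qed auto

lemma sum_bary_mult_bernstein:
  "(\<Sum>i\<le>n. w i * (\<Sum>\<beta>\<in>multi_idx n l. bernstein n l \<beta> w * X (add_unit \<beta> i))) =
   (\<Sum>\<beta>'\<in>multi_idx n (Suc l). bernstein n (Suc l) \<beta>' w * X \<beta>')"
proof -
  define h where "h i \<beta>' = real (\<beta>' i) / (real l + 1) * bernstein n (Suc l) \<beta>' w * X \<beta>'" for i \<beta>'
  have "(\<Sum>i\<le>n. w i * (\<Sum>\<beta>\<in>multi_idx n l. bernstein n l \<beta> w * X (add_unit \<beta> i))) =
        (\<Sum>i\<le>n. \<Sum>\<beta>\<in>multi_idx n l. h i (add_unit \<beta> i))"
  proof (rule sum.cong[OF refl])
    fix i assume i: "i \<in> {..n}"
    show "w i * (\<Sum>\<beta>\<in>multi_idx n l. bernstein n l \<beta> w * X (add_unit \<beta> i)) =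
          (\<Sum>\<beta>\<in>multi_idx n l. h i (add_unit \<beta> i))"
      unfolding sum_distrib_left
    proof (rule sum.cong[OF refl])
      fix \<beta> show "w i * (bernstein n l \<beta> w * X (add_unit \<beta> i)) = h i (add_unit \<beta> i)"
        using bary_mult_bernstein[of i n w l \<beta>] i
        by (simp add: h_def add_unit_def ehat_def mult.assoc[symmetric] add.commute)
    qed
  qed
  also have "\<dots> = (\<Sum>i\<le>n. \<Sum>\<beta>'\<in>{\<beta>'\<in>multi_idx n (Suc l). \<beta>' i > 0}. h i \<beta>')"
    by (intro sum.cong refl sum_multi_idx_add_unit) auto
  also have "\<dots> = (\<Sum>i\<le>n. \<Sum>\<beta>'\<in>multi_idx n (Suc l). h i \<beta>')"
    by (intro sum.cong refl sum.mono_neutral_left multi_idx_finite) (auto simp: h_def)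
  also have "\<dots> = (\<Sum>\<beta>'\<in>multi_idx n (Suc l). \<Sum>i\<le>n. h i \<beta>')" by (rule sum.swap)
  also have "\<dots> = (\<Sum>\<beta>'\<in>multi_idx n (Suc l). bernstein n (Suc l) \<beta>' w * X \<beta>')"
  proof (rule sum.cong[OF refl])
    fix \<beta>' assume b: "\<beta>' \<in> multi_idx n (Suc l)"
    have "(\<Sum>i\<le>n. h i \<beta>') = (\<Sum>i\<le>n. real (\<beta>' i)) / (real l + 1) * bernstein n (Suc l) \<beta>' w * X \<beta>'"
      unfolding h_def sum_distrib_right sum_divide_distrib by simp
    also have "(\<Sum>i\<le>n. real (\<beta>' i)) = real l + 1"
      using b by (simp add: multi_idx_def flip: of_nat_sum)
    finally show "(\<Sum>i\<le>n. h i \<beta>') = bernstein n (Suc l) \<beta>' w * X \<beta>'" by simp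
  qed
  finally show ?thesis .
qed

section \<open>Blossoms\<close>

definition shift_coef :: "(midx \<Rightarrow> real) \<Rightarrow> nat \<Rightarrow> midx \<Rightarrow> real" where
  "shift_coef c a = (\<lambda>\<gamma>. c (add_unit \<gamma> a))"

text \<open>\<open>blossom n c [\<pi>\<^sub>1, \<dots>, \<pi>\<^sub>k]\<close> is the blossom (polar form) of the degree \<open>k\<close> polynomial with
  Bernstein coefficients \<open>c\<close> on \<open>\<Delta>\<close>, evaluated at points given by their barycentric coordinates
  \<open>\<pi>\<^sub>j\<close>: it is affine in each argument and symmetric.\<close>

fun blossom :: "nat \<Rightarrow> (midx \<Rightarrow> real) \<Rightarrow> (nat \<Rightarrow> real) list \<Rightarrow> real" where
  "blossom n c [] = c (\<lambda>_. 0)"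
| "blossom n c (\<pi> # \<pi>s) = (\<Sum>a\<le>n. \<pi> a * blossom n (shift_coef c a) \<pi>s)"

definition prob_vec :: "nat \<Rightarrow> (nat \<Rightarrow> real) \<Rightarrow> bool" where
  "prob_vec n \<pi> \<longleftrightarrow> (\<forall>a\<le>n. \<pi> a \<ge> 0) \<and> (\<Sum>a\<le>n. \<pi> a) = 1"

lemma blossom_linear:
  "blossom n (\<lambda>\<gamma>. u * c \<gamma> + v * d \<gamma>) \<pi>s = u * blossom n c \<pi>s + v * blossom n d \<pi>s"
proof (induction \<pi>s arbitrary: c d)
  case Nil thus ?case by simp
next
  case (Cons \<pi> \<pi>s)
  have "blossom n (\<lambda>\<gamma>. u * c \<gamma> + v * d \<gamma>) (\<pi> # \<pi>s) =
        (\<Sum>a\<le>n. \<pi> a * (u * blossom n (shift_coef c a) \<pi>s + v * blossom n (shift_coef d a) \<pi>s))"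
    using Cons.IH[of "shift_coef c _" "shift_coef d _"] by (simp add: shift_coef_def)
  also have "\<dots> = u * blossom n c (\<pi> # \<pi>s) + v * blossom n d (\<pi> # \<pi>s)"
    by (simp add: sum.distrib sum_distrib_left algebra_simps)
  finally show ?case .
qed

lemma blossom_scale: "blossom n (\<lambda>\<gamma>. u * c \<gamma>) \<pi>s = u * blossom n c \<pi>s"
  using blossom_linear[of n u c 0 c \<pi>s] by simp

lemma blossom_add: "blossom n (\<lambda>\<gamma>. c \<gamma> + d \<gamma>) \<pi>s = blossom n c \<pi>s + blossom n d \<pi>s"
  using blossom_linear[of n 1 c 1 d \<pi>s] by simp

lemma blossom_uminus: "blossom n (\<lambda>\<gamma>. - c \<gamma>) \<pi>s = - blossom n c \<pi>s"
  using blossom_scale[of n "-1" c \<pi>s] by simp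

lemma zero_multi_idx: "(\<lambda>_. 0) \<in> multi_idx n 0"
  by (simp add: multi_idx_def)

lemma blossom_mono:
  assumes "\<forall>\<pi>\<in>set \<pi>s. prob_vec n \<pi>"
    and "\<forall>\<gamma>\<in>multi_idx n (length \<pi>s). c \<gamma> \<le> d \<gamma>"
  shows "blossom n c \<pi>s \<le> blossom n d \<pi>s"
  using assms
proof (induction \<pi>s arbitrary: c d)
  case Nil thus ?case using zero_multi_idx by simp
next
  case (Cons \<pi> \<pi>s)
  have "\<pi> a * blossom n (shift_coef c a) \<pi>s \<le> \<pi> a * blossom n (shift_coef d a) \<pi>s" if a: "a \<le> n" for a
  proof (rule mult_left_mono)
    show "blossom n (shift_coef c a) \<pi>s \<le> blossom n (shift_coef d a) \<pi>s"
      using Cons.prems a by (intro Cons.IH) (auto simp: shift_coef_def add_unit_multi_idx)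
    show "0 \<le> \<pi> a" using Cons.prems a by (auto simp: prob_vec_def)
  qed
  thus ?case by (auto intro: sum_mono)
qed

lemma blossom_const:
  assumes "\<forall>\<pi>\<in>set \<pi>s. prob_vec n \<pi>"
  shows "blossom n (\<lambda>_. k) \<pi>s = k"
  using assms
proof (induction \<pi>s)
  case Nil thus ?case by simp
next
  case (Cons \<pi> \<pi>s)
  have "blossom n (\<lambda>_. k) (\<pi> # \<pi>s) = (\<Sum>a\<le>n. \<pi> a * k)"
    using Cons by (simp add: shift_coef_def)
  also have "\<dots> = k" using Cons.prems by (simp add: prob_vec_def flip: sum_distrib_right)
  finally show ?case .
qed

lemma add_unit_commute: "add_unit (add_unit \<gamma> a) b = add_unit (add_unit \<gamma> b) a"
  by (auto simp: add_unit_def fun_eq_iff)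

lemma blossom_swap: "blossom n c (x # y # zs) = blossom n c (y # x # zs)"
proof -
  have "blossom n c (x # y # zs) = (\<Sum>a\<le>n. \<Sum>b\<le>n. x a * y b * blossom n (shift_coef (shift_coef c a) b) zs)"
    by (simp add: sum_distrib_left mult.assoc)
  also have "\<dots> = (\<Sum>b\<le>n. \<Sum>a\<le>n. x a * y b * blossom n (shift_coef (shift_coef c a) b) zs)"
    by (rule sum.swap)
  also have "\<dots> = blossom n c (y # x # zs)"
    by (simp add: sum_distrib_left mult.assoc mult.left_commute shift_coef_def add_unit_commute)
  finally show ?thesis .
qed

lemma blossom_move: "blossom n c (ys1 @ x # ys2) = blossom n c (x # ys1 @ ys2)"
proof (induction ys1 arbitrary: c)
  case Nil thus ?case by simp
next
  case (Cons y ys1)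
  have "blossom n c ((y # ys1) @ x # ys2) = (\<Sum>a\<le>n. y a * blossom n (shift_coef c a) (x # ys1 @ ys2))"
    using Cons by simp
  also have "\<dots> = blossom n c (y # x # ys1 @ ys2)" by simp
  also have "\<dots> = blossom n c (x # (y # ys1) @ ys2)" using blossom_swap by simp
  finally show ?case .
qed

lemma blossom_perm: "mset xs = mset ys \<Longrightarrow> blossom n c xs = blossom n c ys"
proof (induction xs arbitrary: c ys)
  case Nil thus ?case by simp
next
  case (Cons x xs)
  have "x \<in> set ys" using Cons.prems by (metis list.set_intros(1) set_mset_mset)
  then obtain ys1 ys2 where ys: "ys = ys1 @ x # ys2" by (meson split_list)
  have m: "mset xs = mset (ys1 @ ys2)" using Cons.prems ys by simp
  have "blossom n c ys = blossom n c (x # ys1 @ ys2)" using ys blossom_move by simp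
  also have "\<dots> = blossom n c (x # xs)" using Cons.IH[OF m] by simp
  finally show ?case by simp
qed

lemma bernstein_0: "bernstein n 0 (\<lambda>_. 0) w = 1"
  by (simp add: bernstein_def)

lemma multi_idx_0: "multi_idx n 0 = {\<lambda>_. 0}"
proof (auto simp: multi_idx_def fun_eq_iff)
  fix x :: midx and k assume "\<forall>i>n. x i = 0" "\<forall>a\<in>{..n}. x a = 0"
  thus "x k = 0" by (cases "k \<le> n") auto
qed

lemma blossom_replicate:
  "blossom n c (replicate l w) = (\<Sum>\<beta>\<in>multi_idx n l. c \<beta> * bernstein n l \<beta> w)"
proof (induction l arbitrary: c)
  case 0 thus ?case by (simp add: multi_idx_0 bernstein_0)
next
  case (Suc l)
  have "blossom n c (replicate (Suc l) w) = (\<Sum>a\<le>n. w a * (\<Sum>\<beta>\<in>multi_idx n l. bernstein n l \<beta> w * c (add_unit \<beta> a)))"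
    using Suc by (simp add: shift_coef_def mult.commute)
  also have "\<dots> = (\<Sum>\<beta>\<in>multi_idx n (Suc l). c \<beta> * bernstein n (Suc l) \<beta> w)"
    by (subst sum_bary_mult_bernstein) (simp add: mult.commute)
  finally show ?case .
qed

definition blossom_args :: "nat \<Rightarrow> (nat \<Rightarrow> nat \<Rightarrow> real) \<Rightarrow> midx \<Rightarrow> (nat \<Rightarrow> real) list" where
  "blossom_args n \<mu> \<beta> = concat (map (\<lambda>i. replicate (\<beta> i) (\<mu> i)) [0..<Suc n])"

lemma sum_list_upt_Suc: "sum_list (map f [0..<Suc n]) = (\<Sum>i\<le>n. (f i :: 'a :: comm_monoid_add))"
  unfolding interv_sum_list_conv_sum_set_nat set_upt atLeast0LessThan lessThan_Suc_atMost ..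

lemma mset_blossom_args: "mset (blossom_args n \<mu> \<beta>) = (\<Sum>i\<le>n. replicate_mset (\<beta> i) (\<mu> i))"
proof -
  have "mset (blossom_args n \<mu> \<beta>) = sum_list (map (\<lambda>i. replicate_mset (\<beta> i) (\<mu> i)) [0..<Suc n])"
    unfolding blossom_args_def by (simp add: mset_concat comp_def)
  also have "\<dots> = (\<Sum>i\<le>n. replicate_mset (\<beta> i) (\<mu> i))"
    by (rule sum_list_upt_Suc)
  finally show ?thesis .
qed

lemma mset_blossom_args_add_unit:
  assumes "i \<le> n"
  shows "mset (blossom_args n \<mu> (add_unit \<beta> i)) = mset (\<mu> i # blossom_args n \<mu> \<beta>)"
proof -
  have "mset (blossom_args n \<mu> (add_unit \<beta> i)) = (\<Sum>j\<le>n. replicate_mset (\<beta> j) (\<mu> j) + (if j = i then {#\<mu> j#} else {#}))"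
    unfolding mset_blossom_args by (rule sum.cong) (auto simp: add_unit_def ehat_def)
  also have "\<dots> = mset (blossom_args n \<mu> \<beta>) + {#\<mu> i#}"
    unfolding sum.distrib mset_blossom_args using assms by (simp add: sum.delta)
  finally show ?thesis by simp
qed

lemma length_blossom_args: "length (blossom_args n \<mu> \<beta>) = (\<Sum>i\<le>n. \<beta> i)"
  unfolding blossom_args_def length_concat map_map comp_def sum_list_upt_Suc by simp

lemma blossom_Cons_comb:
  "blossom n c ((\<lambda>a. \<Sum>i\<le>n. w i * \<mu> i a) # xs) = (\<Sum>i\<le>n. w i * blossom n c (\<mu> i # xs))"
proof -
  have "blossom n c ((\<lambda>a. \<Sum>i\<le>n. w i * \<mu> i a) # xs) = (\<Sum>a\<le>n. \<Sum>i\<le>n. w i * (\<mu> i a * blossom n (shift_coef c a) xs))"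
    by (simp add: sum_distrib_right mult.assoc)
  also have "\<dots> = (\<Sum>i\<le>n. \<Sum>a\<le>n. w i * (\<mu> i a * blossom n (shift_coef c a) xs))"
    by (rule sum.swap)
  also have "\<dots> = (\<Sum>i\<le>n. w i * blossom n c (\<mu> i # xs))"
    by (simp add: sum_distrib_left)
  finally show ?thesis .
qed

lemma blossom_replicate_comb:
  "blossom n c (replicate l (\<lambda>a. \<Sum>i\<le>n. w i * \<mu> i a)) =
   (\<Sum>\<beta>\<in>multi_idx n l. bernstein n l \<beta> w * blossom n c (blossom_args n \<mu> \<beta>))"
proof (induction l arbitrary: c)
  case 0 thus ?case using length_blossom_args[of n \<mu> "\<lambda>_. 0"] by (simp add: multi_idx_0 bernstein_0)
next
  case (Suc l)
  let ?r = "\<lambda>a. \<Sum>i\<le>n. w i * \<mu> i a"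
  have "blossom n c (replicate (Suc l) ?r) = (\<Sum>a\<le>n. ?r a * (\<Sum>\<beta>\<in>multi_idx n l. bernstein n l \<beta> w * blossom n (shift_coef c a) (blossom_args n \<mu> \<beta>)))"
    using Suc by simp
  also have "\<dots> = (\<Sum>a\<le>n. \<Sum>\<beta>\<in>multi_idx n l. bernstein n l \<beta> w * (?r a * blossom n (shift_coef c a) (blossom_args n \<mu> \<beta>)))"
    by (simp add: sum_distrib_left mult.left_commute)
  also have "\<dots> = (\<Sum>\<beta>\<in>multi_idx n l. \<Sum>a\<le>n. bernstein n l \<beta> w * (?r a * blossom n (shift_coef c a) (blossom_args n \<mu> \<beta>)))"
    by (rule sum.swap)
  also have "\<dots> = (\<Sum>\<beta>\<in>multi_idx n l. bernstein n l \<beta> w * blossom n c (?r # blossom_args n \<mu> \<beta>))"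
    by (simp only: blossom.simps sum_distrib_left)
  also have "\<dots> = (\<Sum>\<beta>\<in>multi_idx n l. bernstein n l \<beta> w * (\<Sum>i\<le>n. w i * blossom n c (blossom_args n \<mu> (add_unit \<beta> i))))"
  proof (intro sum.cong refl)
    fix \<beta> :: midx
    have "blossom n c (?r # blossom_args n \<mu> \<beta>) = (\<Sum>i\<le>n. w i * blossom n c (\<mu> i # blossom_args n \<mu> \<beta>))"
      by (rule blossom_Cons_comb)
    also have "\<dots> = (\<Sum>i\<le>n. w i * blossom n c (blossom_args n \<mu> (add_unit \<beta> i)))"
      by (intro sum.cong refl) (metis blossom_perm mset_blossom_args_add_unit atMost_iff)
    finally show "bernstein n l \<beta> w * blossom n c (?r # blossom_args n \<mu> \<beta>) =
        bernstein n l \<beta> w * (\<Sum>i\<le>n. w i * blossom n c (blossom_args n \<mu> (add_unit \<beta> i)))" by simp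
  qed
  also have "\<dots> = (\<Sum>\<beta>\<in>multi_idx n l. \<Sum>i\<le>n. w i * (bernstein n l \<beta> w * blossom n c (blossom_args n \<mu> (add_unit \<beta> i))))"
    by (simp add: sum_distrib_left mult.left_commute)
  also have "\<dots> = (\<Sum>i\<le>n. \<Sum>\<beta>\<in>multi_idx n l. w i * (bernstein n l \<beta> w * blossom n c (blossom_args n \<mu> (add_unit \<beta> i))))"
    by (rule sum.swap)
  also have "\<dots> = (\<Sum>i\<le>n. w i * (\<Sum>\<beta>\<in>multi_idx n l. bernstein n l \<beta> w * blossom n c (blossom_args n \<mu> (add_unit \<beta> i))))"
    by (simp add: sum_distrib_left)
  also have "\<dots> = (\<Sum>\<beta>\<in>multi_idx n (Suc l). bernstein n (Suc l) \<beta> w * blossom n c (blossom_args n \<mu> \<beta>))"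
    by (rule sum_bary_mult_bernstein)
  finally show ?case .
qed

section \<open>The averaging inequality for semiconvex coefficients\<close>

definition centroid :: "(nat \<Rightarrow> real) list \<Rightarrow> nat \<Rightarrow> real" where
  "centroid \<pi>s = (\<lambda>a. sum_list (map (\<lambda>\<pi>. \<pi> a) \<pi>s) / real (length \<pi>s))"

text \<open>Barycentric coordinates \<open>1..n\<close> with respect to \<open>\<Delta>\<close> are the Cartesian coordinates, so
  \<open>cart_sqnorm\<close> of a difference of barycentric vectors is a squared Euclidean distance.\<close>

definition cart_sqnorm :: "nat \<Rightarrow> (nat \<Rightarrow> real) \<Rightarrow> real" where
  "cart_sqnorm n d = (\<Sum>a\<in>{1..n}. (d a)^2)"

definition scatter :: "nat \<Rightarrow> (nat \<Rightarrow> real) list \<Rightarrow> real" where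
  "scatter n \<pi>s = sum_list (map (\<lambda>\<pi>. cart_sqnorm n (\<lambda>a. \<pi> a - centroid \<pi>s a)) \<pi>s)"

definition semiconvex :: "nat \<Rightarrow> real \<Rightarrow> (midx \<Rightarrow> real) \<Rightarrow> nat \<Rightarrow> bool" where
  "semiconvex n K c l \<longleftrightarrow> (\<forall>\<gamma>. (\<forall>i>n. \<gamma> i = 0) \<longrightarrow> (\<Sum>i\<le>n. \<gamma> i) + 2 = l \<longrightarrow>
     (\<forall>d. (\<Sum>a\<le>n. d a) = 0 \<longrightarrow>
        (\<Sum>a\<le>n. \<Sum>b\<le>n. d a * d b * c (add_unit (add_unit \<gamma> a) b)) \<ge> - K * cart_sqnorm n d))"

lemma semiconvex_shift_coef:
  assumes "semiconvex n K c (Suc l)" "a \<le> n"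
  shows "semiconvex n K (shift_coef c a) l"
  unfolding semiconvex_def
proof (intro allI impI)
  fix \<gamma> :: midx and d :: "nat \<Rightarrow> real"
  assume g: "\<forall>i>n. \<gamma> i = 0" "(\<Sum>i\<le>n. \<gamma> i) + 2 = l" and d: "(\<Sum>a\<le>n. d a) = 0"
  have g': "\<forall>i>n. add_unit \<gamma> a i = 0" "(\<Sum>i\<le>n. add_unit \<gamma> a i) + 2 = Suc l"
    using g assms(2) by (auto simp: add_unit_def ehat_def sum.distrib)
  have "(\<Sum>a'\<le>n. \<Sum>b\<le>n. d a' * d b * c (add_unit (add_unit (add_unit \<gamma> a) a') b)) \<ge> - K * cart_sqnorm n d"
    using assms(1) g' d unfolding semiconvex_def by blast
  moreover have "add_unit (add_unit (add_unit \<gamma> a) a') b = add_unit (add_unit (add_unit \<gamma> a') b) a" for a' b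
    by (auto simp: add_unit_def fun_eq_iff)
  ultimately show "(\<Sum>a'\<le>n. \<Sum>b\<le>n. d a' * d b * shift_coef c a (add_unit (add_unit \<gamma> a') b)) \<ge> - K * cart_sqnorm n d"
    by (simp add: shift_coef_def)
qed

lemma blossom_sum: "finite A \<Longrightarrow> blossom n (\<lambda>\<gamma>. \<Sum>x\<in>A. f x \<gamma>) \<pi>s = (\<Sum>x\<in>A. blossom n (f x) \<pi>s)"
proof (induction A rule: finite_induct)
  case empty
  show ?case using blossom_scale[of n 0 "\<lambda>_. 0" \<pi>s] by simp
next
  case (insert x A)
  thus ?case by (simp add: blossom_add)
qed

lemma blossom_Cons_Cons: "blossom n c (x # y # zs) = (\<Sum>a\<le>n. \<Sum>b\<le>n. x a * y b * blossom n (shift_coef (shift_coef c a) b) zs)"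
  by (simp add: sum_distrib_left mult.assoc)

lemma sum_sq_dev_split:
  fixes xs :: "real list"
  assumes "xs \<noteq> []"
  shows "sum_list (map (\<lambda>x. (x - z)^2) xs) =
         sum_list (map (\<lambda>x. (x - sum_list xs / length xs)^2) xs) + length xs * (sum_list xs / length xs - z)^2"
proof -
  define r where "r = sum_list xs / length xs"
  have sr: "sum_list xs = length xs * r" using assms by (simp add: r_def)
  have "(\<lambda>x. (x - z)^2) = (\<lambda>x. (x - r)^2 + 2 * (r - z) * x + (z^2 - r^2))"
    by (auto simp: fun_eq_iff power2_eq_square algebra_simps)
  hence "sum_list (map (\<lambda>x. (x - z)^2) xs) =
     sum_list (map (\<lambda>x. (x - r)^2) xs) + 2 * (r - z) * sum_list xs + length xs * (z^2 - r^2)"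
    by (simp add: sum_list_addf sum_list_const_mult sum_list_triv)
  also have "\<dots> = sum_list (map (\<lambda>x. (x - r)^2) xs) + length xs * (r - z)^2"
    unfolding sr by (simp add: power2_eq_square algebra_simps)
  finally show ?thesis by (simp add: r_def)
qed

lemma pair_averaging_identity:
  fixes m ta ra tb rb M :: real
  assumes "m \<ge> 0"
  shows "(ta + (m+1) * ra) / (m+2) * (((m+1) * tb + rb) / (m+2)) * M - (m + 1) / (m + 2)^2 * ((ta - ra) * (tb - rb) * M) =
            (ta * rb * M + (m+1) * (ra * tb * M)) / (m+2)"
proof -
  have "m + 2 \<noteq> 0" using assms by simp
  thus ?thesis by (simp add: divide_simps power2_eq_square) (simp add: algebra_simps)
qed

lemma sum_sum_linear_divide:
  "(\<Sum>a\<in>A. \<Sum>b\<in>B. (f a b + k * g a b) / (d::real)) = ((\<Sum>a\<in>A. \<Sum>b\<in>B. f a b) + k * (\<Sum>a\<in>A. \<Sum>b\<in>B. g a b)) / d"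
  by (simp add: sum.distrib sum_distrib_left add_divide_distrib sum_divide_distrib)

lemma blossom_pair_averaging:
  fixes \<tau> \<rho> :: "nat \<Rightarrow> real"
  assumes dt: "prob_vec n \<tau>" and dr: "prob_vec n \<rho>" and dz: "\<forall>\<pi>\<in>set zs. prob_vec n \<pi>"
    and lz: "length zs = m" and cv: "semiconvex n K c (m + 2)"
  shows "blossom n c (\<tau> # \<rho> # zs) \<le>
     blossom n c ((\<lambda>a. (\<tau> a + (real m + 1) * \<rho> a) / (real m + 2)) # (\<lambda>a. ((real m + 1) * \<tau> a + \<rho> a) / (real m + 2)) # zs)
     + K * (m+1) / (m+2)^2 * cart_sqnorm n (\<lambda>a. \<tau> a - \<rho> a)"
proof -
  define M where "M a b = blossom n (shift_coef (shift_coef c a) b) zs" for a b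
  define pb where "pb = (\<lambda>a. (\<tau> a + (real m + 1) * \<rho> a) / (real m + 2))"
  define rp where "rp = (\<lambda>a. ((real m + 1) * \<tau> a + \<rho> a) / (real m + 2))"
  define u where "u = (\<lambda>a. \<tau> a - \<rho> a)"
  define cc where "cc = (real m + 1) / (real m + 2)^2"
  have Msym: "M a b = M b a" for a b
    unfolding M_def shift_coef_def by (simp add: add_unit_commute)
  define X where "X = (\<Sum>a\<le>n. \<Sum>b\<le>n. \<tau> a * \<rho> b * M a b)"
  define Y where "Y = (\<Sum>a\<le>n. \<Sum>b\<le>n. pb a * rp b * M a b)"
  define U where "U = (\<Sum>a\<le>n. \<Sum>b\<le>n. u a * u b * M a b)"
  have sym: "(\<Sum>a\<le>n. \<Sum>b\<le>n. \<rho> a * \<tau> b * M a b) = X"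
  proof -
    have "(\<Sum>a\<le>n. \<Sum>b\<le>n. \<rho> a * \<tau> b * M a b) = (\<Sum>b\<le>n. \<Sum>a\<le>n. \<rho> a * \<tau> b * M a b)"
      by (rule sum.swap)
    also have "\<dots> = X" unfolding X_def by (simp add: Msym mult.commute)
    finally show ?thesis .
  qed
  have pw: "pb a * rp b * M a b - cc * (u a * u b * M a b) =
            (\<tau> a * \<rho> b * M a b + (m+1) * (\<rho> a * \<tau> b * M a b)) / (m+2)" for a b
    unfolding pb_def rp_def u_def cc_def using pair_averaging_identity[of "real m" "\<tau> a" "\<rho> a" "\<tau> b" "\<rho> b" "M a b"] by (simp add: ac_simps)
  have "Y - cc * U = (\<Sum>a\<le>n. \<Sum>b\<le>n. pb a * rp b * M a b - cc * (u a * u b * M a b))"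
    unfolding Y_def U_def by (simp add: sum_distrib_left sum_subtractf)
  also have "\<dots> = (X + (m+1) * X) / (m+2)"
    unfolding pw sum_sum_linear_divide sym X_def ..
  also have "\<dots> = X" by (simp add: field_simps)
  finally have XY: "X = Y - cc * U" by simp
  have su: "(\<Sum>a\<le>n. u a) = 0" using dt dr by (simp add: u_def sum_subtractf prob_vec_def)
  have "U = blossom n (\<lambda>\<gamma>. \<Sum>a\<le>n. \<Sum>b\<le>n. u a * u b * c (add_unit (add_unit \<gamma> a) b)) zs"
    unfolding U_def M_def by (simp add: blossom_sum blossom_scale shift_coef_def add_unit_commute[of _ a b for a b])
  also have "\<dots> \<ge> blossom n (\<lambda>_. - K * cart_sqnorm n u) zs"
  proof (rule blossom_mono[OF dz], intro ballI)
    fix \<gamma> assume "\<gamma> \<in> multi_idx n (length zs)"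
    hence "\<forall>i>n. \<gamma> i = 0" "(\<Sum>i\<le>n. \<gamma> i) + 2 = m + 2" using lz by (auto simp: multi_idx_def)
    thus "- K * cart_sqnorm n u \<le> (\<Sum>a\<le>n. \<Sum>b\<le>n. u a * u b * c (add_unit (add_unit \<gamma> a) b))"
      using cv su unfolding semiconvex_def by blast
  qed
  also have "blossom n (\<lambda>_. - K * cart_sqnorm n u) zs = - K * cart_sqnorm n u" by (rule blossom_const[OF dz])
  finally have U: "U \<ge> - K * cart_sqnorm n u" .
  have cc0: "cc \<ge> 0" by (simp add: cc_def)
  have "blossom n c (\<tau> # \<rho> # zs) = X" unfolding X_def M_def blossom_Cons_Cons ..
  also have "\<dots> \<le> Y + cc * (K * cart_sqnorm n u)" using XY U cc0 mult_left_mono[OF _ cc0, of "- K * cart_sqnorm n u" U]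
    by simp
  also have "Y = blossom n c (pb # rp # zs)" unfolding Y_def M_def blossom_Cons_Cons ..
  finally show ?thesis by (simp add: pb_def rp_def u_def cc_def ac_simps)
qed

lemma blossom_Cons_le:
  assumes "prob_vec n \<tau>" "\<And>a. a \<le> n \<Longrightarrow> blossom n (shift_coef c a) xs \<le> blossom n (shift_coef c a) ys + E"
  shows "blossom n c (\<tau> # xs) \<le> blossom n c (\<tau> # ys) + E"
proof -
  have "blossom n c (\<tau> # xs) \<le> (\<Sum>a\<le>n. \<tau> a * (blossom n (shift_coef c a) ys + E))"
    unfolding blossom.simps
    by (rule sum_mono, rule mult_left_mono) (use assms in \<open>auto simp: prob_vec_def\<close>)
  also have "\<dots> = blossom n c (\<tau> # ys) + (\<Sum>a\<le>n. \<tau> a) * E"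
    by (simp add: algebra_simps sum.distrib sum_distrib_right sum_distrib_left)
  finally show ?thesis using assms(1) by (simp add: prob_vec_def)
qed

lemma sum_list_sum_swap:
  "sum_list (map (\<lambda>x. \<Sum>a\<in>A. f x a) xs) = (\<Sum>a\<in>A. sum_list (map (\<lambda>x. f x a) xs))"
  by (induction xs) (auto simp: sum.distrib)

lemma prob_vec_centroid:
  assumes "xs \<noteq> []" "\<forall>\<pi>\<in>set xs. prob_vec n \<pi>"
  shows "prob_vec n (centroid xs)"
proof -
  have "sum_list (map (\<lambda>\<pi>. \<pi> a) xs) \<ge> 0" if "a \<le> n" for a
    using assms that by (intro sum_list_nonneg) (auto simp: prob_vec_def)
  moreover have "(\<Sum>a\<le>n. sum_list (map (\<lambda>\<pi>. \<pi> a) xs)) = sum_list (map (\<lambda>\<pi>. \<Sum>a\<le>n. \<pi> a) xs)"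
    by (simp add: sum_list_sum_swap)
  moreover have "sum_list (map (\<lambda>\<pi>. \<Sum>a\<le>n. \<pi> a) xs) = sum_list (map (\<lambda>\<pi>. 1) xs)"
    using assms(2) by (intro arg_cong[where f = sum_list] map_cong) (auto simp: prob_vec_def)
  ultimately show ?thesis using assms(1)
    by (auto simp: prob_vec_def centroid_def sum_divide_distrib[symmetric] sum_list_triv)
qed

lemma prob_vec_weighted_mean:
  assumes "prob_vec n x" "prob_vec n y" "0 \<le> s" "0 \<le> t" "0 < s + t"
  shows "prob_vec n (\<lambda>a. (s * x a + t * y a) / (s + t))"
  using assms by (auto simp: prob_vec_def sum.distrib sum_distrib_left[symmetric] sum_divide_distrib[symmetric])

lemma scatter_coordwise: "scatter n xs = (\<Sum>a\<in>{1..n}. sum_list (map (\<lambda>\<pi>. (\<pi> a - centroid xs a)^2) xs))"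
  unfolding scatter_def cart_sqnorm_def by (rule sum_list_sum_swap)

lemma scatter_split_identity:
  fixes m t r :: real
  assumes "m \<ge> 0"
  shows "(t - (t + (m+1) * r) / (m+2))^2 + (m+1) * (r - (t + (m+1) * r) / (m+2))^2 =
         2 * (m+1) / (m+2)^2 * (t - r)^2 + (((m+1) * t + r) / (m+2) - (t + (m+1) * r) / (m+2))^2 +
         m * (r - (t + (m+1) * r) / (m+2))^2"
proof -
  have "m + 2 \<noteq> 0" using assms by simp
  thus ?thesis by (simp add: divide_simps power2_eq_square) (simp add: algebra_simps)
qed

lemma centroid_scatter_Cons_split:
  fixes \<tau> \<rho> pb rp :: "nat \<Rightarrow> real" and m :: nat
  assumes lp: "length \<pi>s' = m + 1" and \<rho>_def: "\<rho> = centroid \<pi>s'"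
    and pb_def: "pb = (\<lambda>a. (\<tau> a + (real m + 1) * \<rho> a) / (real m + 2))"
    and rp_def: "rp = (\<lambda>a. ((real m + 1) * \<tau> a + \<rho> a) / (real m + 2))"
  shows "centroid (\<tau> # \<pi>s') = pb" and "centroid (rp # replicate m \<rho>) = pb"
    and "scatter n (\<tau> # \<pi>s') = scatter n \<pi>s' + 2 * ((m+1) / (m+2)^2 * cart_sqnorm n (\<lambda>a. \<tau> a - \<rho> a))
           + scatter n (rp # replicate m \<rho>)"
proof -
  have sum_ps': "sum_list (map (\<lambda>\<pi>. \<pi> a) \<pi>s') = (m+1) * \<rho> a" for a
    using lp by (simp add: \<rho>_def centroid_def)
  show mean_ps: "centroid (\<tau> # \<pi>s') = pb"
    using lp by (auto simp: fun_eq_iff centroid_def pb_def sum_ps' add.commute)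
  show mean_rp: "centroid (rp # replicate m \<rho>) = pb"
  proof -
    have "rp a + m * \<rho> a = (m + 1) * pb a" for a
      unfolding rp_def pb_def by (simp add: field_simps)
    thus ?thesis by (auto simp: centroid_def fun_eq_iff sum_list_triv sum_list_replicate field_simps)
  qed
  show "scatter n (\<tau> # \<pi>s') = scatter n \<pi>s' + 2 * ((m+1) / (m+2)^2 * cart_sqnorm n (\<lambda>a. \<tau> a - \<rho> a))
           + scatter n (rp # replicate m \<rho>)"
  proof -
    have "scatter n (\<tau> # \<pi>s') = (\<Sum>a\<in>{1..n}. (\<tau> a - pb a)^2 + sum_list (map (\<lambda>\<pi>. (\<pi> a - pb a)^2) \<pi>s'))"
      unfolding scatter_coordwise mean_ps by simp
    also have "\<dots> = (\<Sum>a\<in>{1..n}. (\<tau> a - pb a)^2 + sum_list (map (\<lambda>\<pi>. (\<pi> a - \<rho> a)^2) \<pi>s') + (m+1) * (\<rho> a - pb a)^2)"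
    proof (rule sum.cong[OF refl])
      fix a
      have ne: "map (\<lambda>\<pi>. \<pi> a) \<pi>s' \<noteq> []" using lp by auto
      have "sum_list (map (\<lambda>\<pi>. (\<pi> a - pb a)^2) \<pi>s') = sum_list (map (\<lambda>x. (x - pb a)^2) (map (\<lambda>\<pi>. \<pi> a) \<pi>s'))"
        by (simp add: comp_def)
      also have "\<dots> = sum_list (map (\<lambda>x. (x - \<rho> a)^2) (map (\<lambda>\<pi>. \<pi> a) \<pi>s')) + (m+1) * (\<rho> a - pb a)^2"
        using sum_sq_dev_split[OF ne, of "pb a"] lp by (simp add: \<rho>_def centroid_def)
      finally show "(\<tau> a - pb a)^2 + sum_list (map (\<lambda>\<pi>. (\<pi> a - pb a)^2) \<pi>s') =
         (\<tau> a - pb a)^2 + sum_list (map (\<lambda>\<pi>. (\<pi> a - \<rho> a)^2) \<pi>s') + (m+1) * (\<rho> a - pb a)^2"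
        by (simp add: comp_def)
    qed
    also have "\<dots> = (\<Sum>a\<in>{1..n}. sum_list (map (\<lambda>\<pi>. (\<pi> a - \<rho> a)^2) \<pi>s') +
         (2 * ((m+1) / (m+2)^2 * (\<tau> a - \<rho> a)^2) + ((rp a - pb a)^2 + m * (\<rho> a - pb a)^2)))"
    proof (rule sum.cong[OF refl])
      fix a
      show "(\<tau> a - pb a)^2 + sum_list (map (\<lambda>\<pi>. (\<pi> a - \<rho> a)^2) \<pi>s') + (m+1) * (\<rho> a - pb a)^2 =
         sum_list (map (\<lambda>\<pi>. (\<pi> a - \<rho> a)^2) \<pi>s') +
         (2 * ((m+1) / (m+2)^2 * (\<tau> a - \<rho> a)^2) + ((rp a - pb a)^2 + m * (\<rho> a - pb a)^2))"
        using scatter_split_identity[of "real m" "\<tau> a" "\<rho> a"] unfolding pb_def rp_def by (simp add: ac_simps)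
    qed
    also have "\<dots> = scatter n \<pi>s' + 2 * ((m+1) / (m+2)^2 * cart_sqnorm n (\<lambda>a. \<tau> a - \<rho> a)) + scatter n (rp # replicate m \<rho>)"
      unfolding scatter_coordwise mean_rp
      by (simp add: sum.distrib cart_sqnorm_def sum_distrib_left \<rho>_def sum_list_triv sum_list_replicate)
    finally show ?thesis by simp
  qed
qed

text \<open>The induction hypothesis replaces the tail by copies
  of its centroid \<open>\<rho>\<close>; semiconvexity averages the pair \<open>(\<tau>, \<rho>)\<close> into \<open>(pb, rp)\<close>; and a
  second use of the hypothesis turns the new tail into copies of \<open>pb\<close>, the centroid of \<open>\<pi>s\<close>.
  The three scatter terms add up to the scatter of \<open>\<pi>s\<close>.\<close>

lemma blossom_le_replicate_centroid:
  "length \<pi>s = l \<Longrightarrow> (\<forall>\<pi>\<in>set \<pi>s. prob_vec n \<pi>) \<Longrightarrow> semiconvex n K c l \<Longrightarrow>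
   blossom n c \<pi>s \<le> blossom n c (replicate l (centroid \<pi>s)) + K / 2 * scatter n \<pi>s"
proof (induction l arbitrary: c \<pi>s rule: less_induct)
  case (less l)
  show ?case
  proof (cases "l \<le> 1")
    case True
    then consider "\<pi>s = []" | \<pi> where "\<pi>s = [\<pi>]" using less.prems(1)
      by (cases \<pi>s) auto
    then show ?thesis
    proof cases
      case 1 thus ?thesis using less.prems by (simp add: scatter_def)
    next
      case 2
      have m1: "centroid [\<pi>] = \<pi>" by (simp add: centroid_def)
      have l1: "l = 1" using 2 less.prems(1) by simp
      show ?thesis using 2 m1 l1 by (simp add: scatter_def cart_sqnorm_def)
    qed
  next
    case False
    define m where "m = l - 2"
    have lm: "l = m + 2" using False by (simp add: m_def)
    obtain \<tau> \<pi>s' where ps: "\<pi>s = \<tau> # \<pi>s'" using less.prems(1) lm by (cases \<pi>s) auto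
    have lp: "length \<pi>s' = m + 1" using ps less.prems(1) lm by simp
    have dt: "prob_vec n \<tau>" and dps: "\<forall>\<pi>\<in>set \<pi>s'. prob_vec n \<pi>" using less.prems(2) ps by auto
    define \<rho> where "\<rho> = centroid \<pi>s'"
    define pb where "pb = (\<lambda>a. (\<tau> a + (real m + 1) * \<rho> a) / (real m + 2))"
    define rp where "rp = (\<lambda>a. ((real m + 1) * \<tau> a + \<rho> a) / (real m + 2))"
    have dr: "prob_vec n \<rho>" unfolding \<rho>_def using dps lp by (intro prob_vec_centroid) auto
    have dpb: "prob_vec n pb"
      using prob_vec_weighted_mean[OF dt dr, of 1 "real m + 1"] by (simp add: pb_def add_ac)
    have drp: "prob_vec n rp"
      using prob_vec_weighted_mean[OF dt dr, of "real m + 1" 1] by (simp add: rp_def add_ac)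
    note split = centroid_scatter_Cons_split[OF lp \<rho>_def pb_def rp_def]
    have mean_ps: "centroid \<pi>s = pb" using split(1) ps by simp
    note mean_rp = split(2)
    have cvs: "semiconvex n K (shift_coef c a) (m + 1)" if "a \<le> n" for a
      using less.prems(3) lm that semiconvex_shift_coef[of n K c "m+1" a] by simp
    have s1: "blossom n c \<pi>s \<le> blossom n c (\<tau> # replicate (m+1) \<rho>) + K/2 * scatter n \<pi>s'"
      unfolding ps
    proof (rule blossom_Cons_le[OF dt])
      fix a assume "a \<le> n"
      show "blossom n (shift_coef c a) \<pi>s' \<le> blossom n (shift_coef c a) (replicate (m + 1) \<rho>) + K / 2 * scatter n \<pi>s'"
        using less.IH[of "m+1" \<pi>s' "shift_coef c a"] lm lp dps cvs[OF \<open>a \<le> n\<close>] by (simp add: \<rho>_def)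
    qed
    have s2: "blossom n c (\<tau> # replicate (m+1) \<rho>) \<le> blossom n c (pb # rp # replicate m \<rho>)
              + K * (m+1) / (m+2)^2 * cart_sqnorm n (\<lambda>a. \<tau> a - \<rho> a)"
      using blossom_pair_averaging[OF dt dr _ _ , of "replicate m \<rho>" m K c] less.prems(3) lm dr
      by (simp add: pb_def rp_def ac_simps)
    have s3: "blossom n c (pb # rp # replicate m \<rho>) \<le> blossom n c (replicate l pb) + K/2 * scatter n (rp # replicate m \<rho>)"
    proof -
      have "blossom n c (pb # rp # replicate m \<rho>) \<le> blossom n c (pb # replicate (m+1) pb) + K/2 * scatter n (rp # replicate m \<rho>)"
      proof (rule blossom_Cons_le[OF dpb])
        fix a assume "a \<le> n"
        show "blossom n (shift_coef c a) (rp # replicate m \<rho>) \<le> blossom n (shift_coef c a) (replicate (m+1) pb) + K/2 * scatter n (rp # replicate m \<rho>)"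
          using less.IH[of "m+1" "rp # replicate m \<rho>" "shift_coef c a"] lm drp dr cvs[OF \<open>a \<le> n\<close>] mean_rp
          by simp
      qed
      thus ?thesis using lm by simp
    qed
    have "blossom n c \<pi>s \<le> blossom n c (replicate l pb) + K/2 * (scatter n \<pi>s' + 2 * ((m+1) / (m+2)^2 * cart_sqnorm n (\<lambda>a. \<tau> a - \<rho> a)) + scatter n (rp # replicate m \<rho>))"
      using s1 s2 s3 by (simp add: algebra_simps)
    thus ?thesis unfolding ps split(3)[symmetric] mean_ps[unfolded ps] .
  qed
qed

section \<open>Second differences and quadratic forms\<close>

lemma square_sum_le_card_sum_squares:
  fixes d :: "nat \<Rightarrow> real"
  assumes "finite B"
  shows "(\<Sum>b\<in>B. d b)^2 \<le> real (card B) * (\<Sum>b\<in>B. (d b)^2)"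
proof -
  define S1 where "S1 = (\<Sum>b\<in>B. d b)"
  define S2 where "S2 = (\<Sum>b\<in>B. (d b)^2)"
  have "0 \<le> (\<Sum>a\<in>B. \<Sum>b\<in>B. (d a - d b)^2)" by (intro sum_nonneg) auto
  also have "\<dots> = (\<Sum>a\<in>B. (real (card B) * (d a)^2 + S2 - 2 * d a * S1))"
  proof (rule sum.cong[OF refl])
    fix a
    have "(\<Sum>b\<in>B. (d a - d b)^2) = (\<Sum>b\<in>B. (d a)^2 + (d b)^2 - 2 * d a * d b)"
      by (rule sum.cong) (auto simp: power2_eq_square algebra_simps)
    also have "\<dots> = real (card B) * (d a)^2 + S2 - 2 * d a * S1"
      unfolding S1_def S2_def by (simp add: sum.distrib sum_subtractf sum_distrib_left)
    finally show "(\<Sum>b\<in>B. (d a - d b)^2) = real (card B) * (d a)^2 + S2 - 2 * d a * S1" .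
  qed
  also have "\<dots> = 2 * (real (card B) * S2) - 2 * S1^2"
    unfolding S1_def S2_def by (simp add: sum.distrib sum_subtractf sum_distrib_left sum_distrib_right power2_eq_square algebra_simps)
  finally show ?thesis unfolding S1_def S2_def by simp
qed

definition next_idx :: "nat \<Rightarrow> nat \<Rightarrow> nat" where
  "next_idx n a = (if a = n then 0 else Suc a)"

lemma prev_next_idx: "a \<le> n \<Longrightarrow> prev_idx n (next_idx n a) = a"
  by (auto simp: prev_idx_def next_idx_def)

lemma next_prev_idx: "a \<le> n \<Longrightarrow> next_idx n (prev_idx n a) = a"
  by (auto simp: prev_idx_def next_idx_def)

lemma prev_idx_le: "a \<le> n \<Longrightarrow> prev_idx n a \<le> n"
  by (auto simp: prev_idx_def)

lemma next_idx_le: "a \<le> n \<Longrightarrow> next_idx n a \<le> n"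
  by (auto simp: next_idx_def)

lemma sum_prev_idx: "(\<Sum>j\<le>n. f (prev_idx n j)) = (\<Sum>j\<le>n. f j)"
  by (rule sum.reindex_bij_witness[where i = "next_idx n" and j = "prev_idx n"])
     (auto simp: prev_next_idx next_prev_idx prev_idx_le next_idx_le)

lemma sum_mult_prev_idx: "(\<Sum>j\<le>n. g j * f (prev_idx n j)) = (\<Sum>j\<le>n. g (next_idx n j) * f j)"
  by (rule sum.reindex_bij_witness[where i = "next_idx n" and j = "prev_idx n"])
     (auto simp: prev_next_idx next_prev_idx prev_idx_le next_idx_le)

definition neg_partial_sum :: "(nat \<Rightarrow> real) \<Rightarrow> nat \<Rightarrow> real" where
  "neg_partial_sum d i = - (\<Sum>b<i. d b)"

lemma neg_partial_sum_diff_next: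
  assumes "(\<Sum>a\<le>n. d a) = 0" "a \<le> n"
  shows "neg_partial_sum d a - neg_partial_sum d (next_idx n a) = d a"
proof (cases "a = n")
  case True
  have "(\<Sum>b<n. d b) + d n = 0" using assms(1) by (simp add: lessThan_Suc_atMost[symmetric])
  thus ?thesis using True by (simp add: neg_partial_sum_def next_idx_def)
next
  case False thus ?thesis by (simp add: neg_partial_sum_def next_idx_def)
qed

lemma sum_by_parts_prev_idx:
  assumes "(\<Sum>a\<le>n. d a) = 0"
  shows "(\<Sum>a\<le>n. d a * f a) = (\<Sum>i\<le>n. neg_partial_sum d i * (f i - f (prev_idx n i)))"
proof -
  have "(\<Sum>i\<le>n. neg_partial_sum d i * (f i - f (prev_idx n i))) =
        (\<Sum>i\<le>n. neg_partial_sum d i * f i) - (\<Sum>i\<le>n. neg_partial_sum d i * f (prev_idx n i))"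
    by (simp add: algebra_simps sum_subtractf)
  also have "(\<Sum>i\<le>n. neg_partial_sum d i * f (prev_idx n i)) = (\<Sum>i\<le>n. neg_partial_sum d (next_idx n i) * f i)"
    by (rule sum_mult_prev_idx)
  also have "(\<Sum>i\<le>n. neg_partial_sum d i * f i) - \<dots> = (\<Sum>i\<le>n. (neg_partial_sum d i - neg_partial_sum d (next_idx n i)) * f i)"
    by (simp add: algebra_simps sum_subtractf)
  also have "\<dots> = (\<Sum>a\<le>n. d a * f a)"
    using neg_partial_sum_diff_next[OF assms] by (intro sum.cong) auto
  finally show ?thesis by simp
qed

lemma neg_partial_sum_diff_sq_le:
  assumes "(\<Sum>a\<le>n. d a) = 0" "i \<le> n" "j \<le> n"
  shows "(neg_partial_sum d i - neg_partial_sum d j)^2 \<le> real n * cart_sqnorm n d"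
proof -
  have main: "(neg_partial_sum d i - neg_partial_sum d j)^2 \<le> real n * cart_sqnorm n d" if ij: "i < j" "j \<le> n" for i j
  proof -
    have "neg_partial_sum d i - neg_partial_sum d j = (\<Sum>b<j. d b) - (\<Sum>b<i. d b)" by (simp add: neg_partial_sum_def)
    also have "\<dots> = (\<Sum>b\<in>{i..<j}. d b)"
    proof -
      have "sum d {0..<j} - sum d {0..<i} = sum d {i..<j}" using ij by (intro sum_diff_nat_ivl) auto
      thus ?thesis by (simp only: atLeast0LessThan)
    qed
    finally have e: "neg_partial_sum d i - neg_partial_sum d j = (\<Sum>b\<in>{i..<j}. d b)" .
    obtain B where B: "B \<subseteq> {1..n}" "(neg_partial_sum d i - neg_partial_sum d j)^2 = (\<Sum>b\<in>B. d b)^2"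
    proof (cases "i = 0")
      case False
      show ?thesis by (rule that[of "{i..<j}"]) (use e ij False in auto)
    next
      case True
      have u: "sum d ({..<j} \<union> {j..n}) = sum d {..<j} + sum d {j..n}"
        by (rule sum.union_disjoint) auto
      have "{..<j} \<union> {j..n} = {..n}" using ij by auto
      hence "(\<Sum>b<j. d b) + (\<Sum>b\<in>{j..n}. d b) = (\<Sum>b\<le>n. d b)" using u by simp
      hence "(\<Sum>b\<in>{i..<j}. d b) = - (\<Sum>b\<in>{j..n}. d b)" using True assms(1)
        by (simp add: atLeast0LessThan)
      thus ?thesis by (intro that[of "{j..n}"]) (use e ij True in auto)
    qed
    have fB: "finite B" using B(1) finite_subset by blast
    have "(\<Sum>b\<in>B. d b)^2 \<le> real (card B) * (\<Sum>b\<in>B. (d b)^2)" by (rule square_sum_le_card_sum_squares[OF fB])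
    also have "\<dots> \<le> real n * cart_sqnorm n d"
    proof (rule mult_mono)
      show "real (card B) \<le> real n" using card_mono[OF _ B(1)] by simp
      show "(\<Sum>b\<in>B. (d b)^2) \<le> cart_sqnorm n d" unfolding cart_sqnorm_def
        by (rule sum_mono2[OF _ B(1)]) auto
    qed (auto intro: sum_nonneg)
    finally show ?thesis using B(2) by simp
  qed
  consider "i = j" | "i < j" | "j < i" by linarith
  thus ?thesis
  proof cases
    case 1 thus ?thesis by (simp add: cart_sqnorm_def sum_nonneg)
  next
    case 2 thus ?thesis using main assms by blast
  next
    case 3 thus ?thesis using main[of j i] assms by (simp add: power2_commute)
  qed
qed

lemma cart_sqnorm_nonneg: "cart_sqnorm n d \<ge> 0"
  unfolding cart_sqnorm_def by (rule sum_nonneg) auto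

definition second_diff :: "nat \<Rightarrow> (nat \<Rightarrow> nat \<Rightarrow> real) \<Rightarrow> nat \<Rightarrow> nat \<Rightarrow> real" where
  "second_diff n M i j = M i (prev_idx n j) + M (prev_idx n i) j - M (prev_idx n i) (prev_idx n j) - M i j"

lemma second_diff_commute:
  assumes "\<And>a b. M a b = M b a"
  shows "second_diff n M i j = second_diff n M j i"
  using assms by (simp add: second_diff_def)

text \<open>Two summations by parts (in both arguments) turn a quadratic form in a zero-sum vector into
  a form in its partial sums whose coefficients are the second differences; the diagonal of the
  latter does not contribute since its rows sum to zero.\<close>

lemma quadratic_form_eq_second_diff_sum:
  fixes M :: "nat \<Rightarrow> nat \<Rightarrow> real"
  assumes sym: "\<And>a b. M a b = M b a" and dz: "(\<Sum>a\<le>n. d a) = 0"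
  shows "(\<Sum>a\<le>n. \<Sum>b\<le>n. d a * d b * M a b)
    = (1/2) * (\<Sum>i\<le>n. \<Sum>j\<le>n. (neg_partial_sum d i - neg_partial_sum d j)^2 * second_diff n M i j)"
proof -
  define x where "x = neg_partial_sum d"
  define E where "E = second_diff n M"
  define G where "G a = (\<Sum>b\<le>n. d b * M a b)" for a
  have "(\<Sum>a\<le>n. \<Sum>b\<le>n. d a * d b * M a b) = (\<Sum>a\<le>n. d a * G a)"
    unfolding G_def by (simp add: sum_distrib_left mult.assoc)
  also have "\<dots> = (\<Sum>i\<le>n. x i * (G i - G (prev_idx n i)))"
    unfolding x_def by (rule sum_by_parts_prev_idx[OF dz])
  also have "\<dots> = - (\<Sum>i\<le>n. \<Sum>j\<le>n. x i * x j * E i j)"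
  proof -
    have "G a = (\<Sum>j\<le>n. x j * (M a j - M a (prev_idx n j)))" for a
      unfolding G_def x_def by (rule sum_by_parts_prev_idx[OF dz])
    then have "G i - G (prev_idx n i) = - (\<Sum>j\<le>n. x j * E i j)" for i
      unfolding E_def second_diff_def
      by (simp add: sum_subtractf[symmetric] sum_negf[symmetric] algebra_simps)
    then show ?thesis by (simp add: sum_distrib_left sum_negf mult.assoc)
  qed
  also have "\<dots> = (1/2) * (\<Sum>i\<le>n. \<Sum>j\<le>n. (x i - x j)^2 * E i j)"
  proof -
    have rowz: "(\<Sum>j\<le>n. E i j) = 0" for i
      using sum_prev_idx[of "M i" n] sum_prev_idx[of "M (prev_idx n i)" n]
      by (simp add: E_def second_diff_def sum.distrib sum_subtractf)
    have colz: "(\<Sum>i\<le>n. E i j) = 0" for j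
      using rowz[of j] second_diff_commute[OF sym] by (simp add: E_def)
    have "(\<Sum>i\<le>n. \<Sum>j\<le>n. (x i - x j)^2 * E i j) =
          (\<Sum>i\<le>n. \<Sum>j\<le>n. (x i)^2 * E i j) + (\<Sum>i\<le>n. \<Sum>j\<le>n. (x j)^2 * E i j)
          - 2 * (\<Sum>i\<le>n. \<Sum>j\<le>n. x i * x j * E i j)"
      by (simp add: sum.distrib sum_subtractf sum_distrib_left power2_eq_square algebra_simps)
    also have "(\<Sum>i\<le>n. \<Sum>j\<le>n. (x i)^2 * E i j) = 0"
      by (simp add: sum_distrib_left[symmetric] rowz)
    also have "(\<Sum>i\<le>n. \<Sum>j\<le>n. (x j)^2 * E i j) = (\<Sum>j\<le>n. \<Sum>i\<le>n. (x j)^2 * E i j)"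
      by (rule sum.swap)
    also have "\<dots> = 0" by (simp add: sum_distrib_left[symmetric] colz)
    finally show ?thesis by simp
  qed
  finally show ?thesis by (simp add: x_def E_def)
qed

lemma abs_quadratic_form_le_second_diff:
  fixes M :: "nat \<Rightarrow> nat \<Rightarrow> real"
  assumes sym: "\<And>a b. M a b = M b a"
    and dz: "(\<Sum>a\<le>n. d a) = 0"
    and hb: "\<And>i j. i < j \<Longrightarrow> j \<le> n \<Longrightarrow> \<bar>second_diff n M i j\<bar> \<le> H"
  shows "\<bar>\<Sum>a\<le>n. \<Sum>b\<le>n. d a * d b * M a b\<bar> \<le> H * (real n ^ 2 * (real n + 1) / 2) * cart_sqnorm n d"
proof -
  define x where "x = neg_partial_sum d"
  define B where "B = real n * cart_sqnorm n d * H"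
  have tb: "\<bar>(x i - x j)^2 * second_diff n M i j\<bar> \<le> (if i = j then 0 else B)"
    if "i \<le> n" "j \<le> n" for i j
  proof (cases "i = j")
    case False
    have "\<bar>second_diff n M i j\<bar> \<le> H"
      using hb[of i j] hb[of j i] that False second_diff_commute[OF sym, where i = i and j = j] by (cases "i < j") auto
    then have "(x i - x j)^2 * \<bar>second_diff n M i j\<bar> \<le> (real n * cart_sqnorm n d) * H"
      using neg_partial_sum_diff_sq_le[OF dz that] unfolding x_def
      by (intro mult_mono) (auto intro: mult_nonneg_nonneg cart_sqnorm_nonneg)
    then show ?thesis using False by (simp add: abs_mult B_def)
  qed simp
  have "\<bar>\<Sum>a\<le>n. \<Sum>b\<le>n. d a * d b * M a b\<bar>
      \<le> (1/2) * (\<Sum>i\<le>n. \<Sum>j\<le>n. \<bar>(x i - x j)^2 * second_diff n M i j\<bar>)"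
  proof -
    have "\<bar>\<Sum>i\<le>n. \<Sum>j\<le>n. (x i - x j)^2 * second_diff n M i j\<bar>
        \<le> (\<Sum>i\<le>n. \<bar>\<Sum>j\<le>n. (x i - x j)^2 * second_diff n M i j\<bar>)"
      by (rule sum_abs)
    also have "\<dots> \<le> (\<Sum>i\<le>n. \<Sum>j\<le>n. \<bar>(x i - x j)^2 * second_diff n M i j\<bar>)"
      by (intro sum_mono sum_abs)
    finally show ?thesis
      unfolding quadratic_form_eq_second_diff_sum[OF sym dz, folded x_def] by (simp add: abs_mult)
  qed
  also have "\<dots> \<le> (1/2) * (\<Sum>i\<le>n. \<Sum>j\<le>n. (if i = j then 0 else B))"
    using tb by (intro mult_left_mono sum_mono) auto
  also have "(\<Sum>i\<le>n. \<Sum>j\<le>n. (if i = j then 0 else B)) = (\<Sum>i\<le>n. real n * B)"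
  proof (rule sum.cong[OF refl])
    fix i assume i: "i \<in> {..n}"
    then have "(\<Sum>j\<le>n. (if i = j then 0 else B)) = (\<Sum>j\<in>{..n}-{i}. B)"
      by (subst sum.remove[of _ i]) (auto intro: sum.cong)
    also have "\<dots> = real n * B" using i by simp
    finally show "(\<Sum>j\<le>n. (if i = j then 0 else B)) = real n * B" .
  qed
  also have "(1/2) * \<dots> = H * (real n ^ 2 * (real n + 1) / 2) * cart_sqnorm n d"
    by (simp add: B_def power2_eq_square algebra_simps)
  finally show ?thesis .
qed

section \<open>Polynomials vanishing on the positive orthant\<close>

definition monomial_exps :: "nat \<Rightarrow> nat \<Rightarrow> midx set" where
  "monomial_exps m d = {\<beta>. (\<forall>i\<ge>m. \<beta> i = 0) \<and> (\<Sum>i<m. \<beta> i) \<le> d}"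

lemma monomial_exps_finite: "finite (monomial_exps m d)"
proof -
  have "monomial_exps m d \<subseteq> (\<lambda>f. \<lambda>i. if i < m then f i else 0) ` (PiE {..<m} (\<lambda>_. {..d}))"
  proof
    fix \<beta> assume b: "\<beta> \<in> monomial_exps m d"
    hence le: "\<beta> i \<le> d" if "i < m" for i
      using that member_le_sum[of i "{..<m}" \<beta>] by (auto simp: monomial_exps_def)
    have "\<beta> = (\<lambda>i. if i < m then restrict \<beta> {..<m} i else 0)"
      using b by (auto simp: monomial_exps_def fun_eq_iff)
    moreover have "restrict \<beta> {..<m} \<in> PiE {..<m} (\<lambda>_. {..d})" using le by auto
    ultimately show "\<beta> \<in> (\<lambda>f. \<lambda>i. if i < m then f i else 0) ` (PiE {..<m} (\<lambda>_. {..d}))"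
      by blast
  qed
  thus ?thesis by (rule finite_subset) (auto intro: finite_PiE)
qed

lemma monomial_exps_split:
  fixes a :: "midx \<Rightarrow> real" and lam :: "nat \<Rightarrow> real"
  shows "(\<Sum>\<beta>\<in>monomial_exps (Suc m) d. a \<beta> * (\<Prod>i<Suc m. lam i ^ \<beta> i)) =
   (\<Sum>j\<le>d. \<Sum>\<beta>'\<in>monomial_exps m d. (if (\<Sum>i<m. \<beta>' i) + j \<le> d then a (\<beta>'(m := j)) else 0) * (\<Prod>i<m. lam i ^ \<beta>' i) * lam m ^ j)"
proof -
  define S where "S = {(j, \<beta>'). j \<le> d \<and> \<beta>' \<in> monomial_exps m d \<and> (\<Sum>i<m. \<beta>' i) + j \<le> d}"
  define g where "g = (\<lambda>(j, \<beta>'). a (\<beta>'(m := j)) * (\<Prod>i<m. lam i ^ \<beta>' i) * lam m ^ j)"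
  have fin: "finite ({..d} \<times> monomial_exps m d)" using monomial_exps_finite by auto
  have "(\<Sum>j\<le>d. \<Sum>\<beta>'\<in>monomial_exps m d. (if (\<Sum>i<m. \<beta>' i) + j \<le> d then a (\<beta>'(m := j)) else 0) * (\<Prod>i<m. lam i ^ \<beta>' i) * lam m ^ j)
     = (\<Sum>x\<in>{..d} \<times> monomial_exps m d. if (\<Sum>i<m. snd x i) + fst x \<le> d then g x else 0)"
    by (subst sum.cartesian_product) (rule sum.cong, auto simp: g_def)
  also have "\<dots> = sum g {x\<in>{..d} \<times> monomial_exps m d. (\<Sum>i<m. snd x i) + fst x \<le> d}"
    by (rule sum.inter_filter[OF fin, symmetric])
  also have "{x\<in>{..d} \<times> monomial_exps m d. (\<Sum>i<m. snd x i) + fst x \<le> d} = S"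
    by (auto simp: S_def)
  also have "sum g S = (\<Sum>\<beta>\<in>monomial_exps (Suc m) d. a \<beta> * (\<Prod>i<Suc m. lam i ^ \<beta> i))"
  proof (rule sum.reindex_bij_witness[where j = "\<lambda>x. (snd x)(m := fst x)" and i = "\<lambda>\<beta>. (\<beta> m, \<beta>(m := 0))"])
    fix x assume "x \<in> S"
    then obtain j \<beta>' where x: "x = (j, \<beta>')" "j \<le> d" "\<beta>' \<in> monomial_exps m d" "(\<Sum>i<m. \<beta>' i) + j \<le> d"
      by (auto simp: S_def)
    have b0: "\<beta>' m = 0" using x(3) by (auto simp: monomial_exps_def)
    have sm: "(\<Sum>i<m. (\<beta>'(m := j)) i) = (\<Sum>i<m. \<beta>' i)" by (intro sum.cong) auto
    show "(((snd x)(m := fst x)) m, ((snd x)(m := fst x))(m := 0)) = x"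
      using x b0 by (auto simp: fun_eq_iff)
    show "(snd x)(m := fst x) \<in> monomial_exps (Suc m) d"
      using x sm by (auto simp: monomial_exps_def)
    have pr0: "(\<Prod>i<m. lam i ^ (\<beta>'(m := j)) i) = (\<Prod>i<m. lam i ^ \<beta>' i)"
      by (intro prod.cong) auto
    have pr: "(\<Prod>i<Suc m. lam i ^ (\<beta>'(m := j)) i) = (\<Prod>i<m. lam i ^ \<beta>' i) * lam m ^ j"
      using pr0 by simp
    show "a ((snd x)(m := fst x)) * (\<Prod>i<Suc m. lam i ^ ((snd x)(m := fst x)) i) = g x"
      using x pr by (simp add: g_def mult.assoc)
  next
    fix \<beta> assume b: "\<beta> \<in> monomial_exps (Suc m) d"
    show "(snd (\<beta> m, \<beta>(m := 0)))(m := fst (\<beta> m, \<beta>(m := 0))) = \<beta>" by auto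
    have sm: "(\<Sum>i<m. (\<beta>(m := 0)) i) = (\<Sum>i<m. \<beta> i)" by (intro sum.cong) auto
    have "(\<Sum>i<Suc m. \<beta> i) \<le> d" using b by (auto simp: monomial_exps_def)
    thus "(\<beta> m, \<beta>(m := 0)) \<in> S" using b sm by (auto simp: S_def monomial_exps_def)
  qed
  finally show ?thesis by simp
qed

lemma univariate_coeff_zero:
  fixes C :: "nat \<Rightarrow> real"
  assumes H: "\<forall>t>0. (\<Sum>j\<le>d. C j * t^j) = 0" and j: "j \<le> d"
  shows "C j = 0"
proof -
  define p where "p = Poly (map C [0..<Suc d])"
  have cp: "coeff p i = (if i \<le> d then C i else 0)" for i
    by (auto simp: p_def nth_default_def simp del: upt_Suc)
  have dp: "degree p \<le> d"
    by (rule degree_le) (auto simp: cp)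
  have pp: "poly p t = (\<Sum>j\<le>d. C j * t^j)" for t
  proof -
    have "poly p t = (\<Sum>i\<le>degree p. coeff p i * t ^ i)" by (rule poly_altdef)
    also have "\<dots> = (\<Sum>i\<le>d. coeff p i * t ^ i)"
      by (rule sum.mono_neutral_left) (use dp in \<open>auto simp: coeff_eq_0\<close>)
    also have "\<dots> = (\<Sum>j\<le>d. C j * t^j)" by (intro sum.cong) (auto simp: cp)
    finally show ?thesis .
  qed
  have "p = 0"
  proof (rule ccontr)
    assume "p \<noteq> 0"
    hence "finite {x. poly p x = 0}" by (rule poly_roots_finite)
    moreover have "{0<..} \<subseteq> {x. poly p x = 0}" using H by (auto simp: pp)
    ultimately have "finite {0::real<..}" by (rule finite_subset[rotated])
    thus False using infinite_Ioi by blast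
  qed
  thus ?thesis using cp[of j] j by simp
qed

lemma coeff_zero_if_zero_on_pos_orthant:
  assumes "\<forall>lam. (\<forall>i<m. lam i > (0::real)) \<longrightarrow> (\<Sum>\<beta>\<in>monomial_exps m d. a \<beta> * (\<Prod>i<m. lam i ^ \<beta> i)) = 0"
    and "\<beta> \<in> monomial_exps m d"
  shows "a \<beta> = 0"
  using assms
proof (induction m arbitrary: a \<beta>)
  case 0
  have "monomial_exps 0 d = {\<lambda>_. 0}" by (auto simp: monomial_exps_def)
  moreover have "\<beta> = (\<lambda>_. 0)" using 0 by (auto simp: monomial_exps_def)
  ultimately show ?case using 0 by simp
next
  case (Suc m)
  define A where "A j \<beta>' = (if (\<Sum>i<m. \<beta>' i) + j \<le> d then a (\<beta>'(m := j)) else 0)" for j \<beta>'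
  have Az: "A j \<beta>' = 0" if j: "j \<le> d" and b': "\<beta>' \<in> monomial_exps m d" for j \<beta>'
  proof -
    have "\<forall>lam. (\<forall>i<m. 0 < lam i) \<longrightarrow> (\<Sum>\<beta>\<in>monomial_exps m d. A j \<beta> * (\<Prod>i<m. lam i ^ \<beta> i)) = 0"
    proof (intro allI impI)
      fix lam :: "nat \<Rightarrow> real" assume pos: "\<forall>i<m. 0 < lam i"
      have "\<forall>t>0. (\<Sum>j\<le>d. (\<Sum>\<beta>\<in>monomial_exps m d. A j \<beta> * (\<Prod>i<m. lam i ^ \<beta> i)) * t ^ j) = 0"
      proof (intro allI impI)
        fix t :: real assume t: "t > 0"
        have p2: "\<forall>i<Suc m. 0 < (lam(m := t)) i" using pos t by auto
        have "(\<Sum>\<beta>\<in>monomial_exps (Suc m) d. a \<beta> * (\<Prod>i<Suc m. (lam(m := t)) i ^ \<beta> i)) = 0"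
          using Suc.prems(1) p2 by blast
        also have "(\<Sum>\<beta>\<in>monomial_exps (Suc m) d. a \<beta> * (\<Prod>i<Suc m. (lam(m := t)) i ^ \<beta> i)) =
           (\<Sum>j\<le>d. \<Sum>\<beta>'\<in>monomial_exps m d. A j \<beta>' * (\<Prod>i<m. (lam(m := t)) i ^ \<beta>' i) * (lam(m := t)) m ^ j)"
          unfolding monomial_exps_split A_def ..
        also have "\<dots> = (\<Sum>j\<le>d. (\<Sum>\<beta>\<in>monomial_exps m d. A j \<beta> * (\<Prod>i<m. lam i ^ \<beta> i)) * t ^ j)"
          by (simp add: sum_distrib_right)
        finally show "(\<Sum>j\<le>d. (\<Sum>\<beta>\<in>monomial_exps m d. A j \<beta> * (\<Prod>i<m. lam i ^ \<beta> i)) * t ^ j) = 0" .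
      qed
      thus "(\<Sum>\<beta>\<in>monomial_exps m d. A j \<beta> * (\<Prod>i<m. lam i ^ \<beta> i)) = 0"
        by (rule univariate_coeff_zero[OF _ j])
    qed
    thus ?thesis using Suc.IH b' by blast
  qed
  have b: "\<beta> \<in> monomial_exps (Suc m) d" by (rule Suc.prems(2))
  have "\<beta>(m := 0) \<in> monomial_exps m d" "\<beta> m \<le> d" "(\<Sum>i<m. (\<beta>(m := 0)) i) + \<beta> m \<le> d"
  proof -
    have sm: "(\<Sum>i<m. (\<beta>(m := 0)) i) = (\<Sum>i<m. \<beta> i)" by (intro sum.cong) auto
    have "(\<Sum>i<Suc m. \<beta> i) \<le> d" using b by (auto simp: monomial_exps_def)
    thus "\<beta>(m := 0) \<in> monomial_exps m d" "\<beta> m \<le> d" "(\<Sum>i<m. (\<beta>(m := 0)) i) + \<beta> m \<le> d"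
      using b sm by (auto simp: monomial_exps_def)
  qed
  hence "A (\<beta> m) (\<beta>(m := 0)) = a \<beta>" by (simp add: A_def)
  thus ?case using Az[of "\<beta> m" "\<beta>(m := 0)"] \<open>\<beta>(m := 0) \<in> monomial_exps m d\<close> \<open>\<beta> m \<le> d\<close> by simp
qed

section \<open>Barycentric coordinates\<close>

definition is_bary :: "nat \<Rightarrow> smplx \<Rightarrow> pt \<Rightarrow> (nat \<Rightarrow> real) \<Rightarrow> bool" where
  "is_bary n V x lam \<longleftrightarrow> (\<forall>i>n. lam i = 0) \<and> (\<Sum>i\<le>n. lam i) = 1 \<and> (\<forall>k. (\<Sum>i\<le>n. lam i * V i k) = x k)"

lemma bary_unique:
  assumes nd: "nondeg_simplex n V" and P1: "is_bary n V x lam" and P2: "is_bary n V x lam'"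
  shows "lam = lam'"
proof -
  define c where "c i = lam i - lam' i" for i
  have "(\<Sum>i\<le>n. c i) = 0" using P1 P2 by (simp add: is_bary_def c_def sum_subtractf)
  moreover have "\<forall>k. (\<Sum>i\<le>n. c i * V i k) = 0"
    using P1 P2 by (simp add: is_bary_def c_def left_diff_distrib sum_subtractf)
  ultimately have "\<forall>i\<le>n. c i = 0" using nd unfolding nondeg_simplex_def by blast
  moreover have "\<forall>i>n. c i = 0" using P1 P2 by (simp add: is_bary_def c_def)
  ultimately show ?thesis by (auto simp: fun_eq_iff c_def) (metis eq_iff_diff_eq_0 not_le)
qed

definition bary_mat :: "nat \<Rightarrow> smplx \<Rightarrow> real mat" where
  "bary_mat n V = mat (Suc n) (Suc n) (\<lambda>(k, i). if k < n then V i k else 1)"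

lemma bary_mat_mult_vec_nth:
  assumes "k < Suc n" "dim_vec v = Suc n"
  shows "(bary_mat n V *\<^sub>v v) $ k = (\<Sum>i\<le>n. (if k < n then V i k else 1) * v $ i)"
  using assms by (simp add: bary_mat_def scalar_prod_def atLeast0LessThan lessThan_Suc_atMost)

lemma bary_mat_right_inverse:
  assumes nd: "nondeg_simplex n V"
  obtains B where "B \<in> carrier_mat (Suc n) (Suc n)" "bary_mat n V * B = 1\<^sub>m (Suc n)"
proof -
  have Ac: "bary_mat n V \<in> carrier_mat (Suc n) (Suc n)" by (simp add: bary_mat_def)
  have inj: "v = 0\<^sub>v (Suc n)"
    if v: "v \<in> carrier_vec (Suc n)" "bary_mat n V *\<^sub>v v = 0\<^sub>v (Suc n)" for v
  proof -
    define c where "c i = (if i \<le> n then v $ i else 0)" for i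
    have dv: "dim_vec v = Suc n" using v by auto
    have "(\<Sum>i\<le>n. c i) = 0"
      using v bary_mat_mult_vec_nth[of n n v V] dv arg_cong[OF v(2), of "\<lambda>w. w $ n"]
      by (simp add: c_def)
    moreover have "(\<Sum>i\<le>n. c i * V i k) = 0" for k
    proof (cases "k < n")
      case True
      then show ?thesis
        using bary_mat_mult_vec_nth[of k n v V] dv arg_cong[OF v(2), of "\<lambda>w. w $ k"]
        by (simp add: c_def mult.commute)
    next
      case False
      then have "V i k = 0" if "i \<le> n" for i
        using nd that unfolding nondeg_simplex_def in_Rn_def by auto
      then show ?thesis by simp
    qed
    ultimately have "\<forall>i\<le>n. c i = 0" using nd unfolding nondeg_simplex_def by blast
    then show ?thesis using dv by (intro eq_vecI) (auto simp: c_def)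
  qed
  have "det (bary_mat n V) \<noteq> 0"
    using inj det_0_iff_vec_prod_zero_field[OF Ac] by auto
  from det_non_zero_imp_unit[OF Ac this, of "()"] show ?thesis
    using that unfolding Units_def by (auto simp: ring_mat_simps)
qed

lemma bary_exists:
  assumes nd: "nondeg_simplex n V" and x: "in_Rn n x"
  shows "\<exists>lam. is_bary n V x lam"
proof -
  obtain B where B: "B \<in> carrier_mat (Suc n) (Suc n)" "bary_mat n V * B = 1\<^sub>m (Suc n)"
    using bary_mat_right_inverse[OF nd] .
  define y :: "real vec" where "y = vec (Suc n) (\<lambda>k. if k < n then x k else 1)"
  define v where "v = B *\<^sub>v y"
  have yc: "y \<in> carrier_vec (Suc n)" by (simp add: y_def)
  have Ac: "bary_mat n V \<in> carrier_mat (Suc n) (Suc n)" by (simp add: bary_mat_def)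
  have Avy: "bary_mat n V *\<^sub>v v = y" unfolding v_def
    using assoc_mult_mat_vec[OF Ac B(1) yc, symmetric] B(2) yc by simp
  have dv: "dim_vec v = Suc n" using B(1) by (simp add: v_def)
  define lam where "lam i = (if i \<le> n then v $ i else 0)" for i
  have "is_bary n V x lam"
    unfolding is_bary_def
  proof (intro conjI allI impI)
    show "lam i = 0" if "n < i" for i using that by (simp add: lam_def)
    show "(\<Sum>i\<le>n. lam i) = 1"
      using bary_mat_mult_vec_nth[of n n v V] dv Avy by (simp add: lam_def y_def)
    fix k show "(\<Sum>i\<le>n. lam i * V i k) = x k"
    proof (cases "k < n")
      case True
      then show ?thesis using bary_mat_mult_vec_nth[of k n v V] dv Avy
        by (simp add: lam_def y_def mult.commute)
    next
      case False
      have "V i k = 0" if "i \<le> n" for i using nd that False unfolding nondeg_simplex_def in_Rn_def by auto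
      moreover have "x k = 0" using x False by (simp add: in_Rn_def)
      ultimately show ?thesis by simp
    qed
  qed
  then show ?thesis by blast
qed

lemma bary_eqI:
  assumes "nondeg_simplex n V" "is_bary n V x lam"
  shows "bary n V x = lam"
  unfolding bary_def
  using assms bary_unique[OF assms(1)] unfolding is_bary_def by (intro the_equality) blast+

lemma bary_is_bary:
  assumes "nondeg_simplex n V" "in_Rn n x"
  shows "is_bary n V x (bary n V x)"
  using bary_exists[OF assms] bary_eqI[OF assms(1)] by metis

section \<open>Bernstein coefficients of polynomials\<close>

definition bernstein_rep :: "nat \<Rightarrow> nat \<Rightarrow> smplx \<Rightarrow> (pt \<Rightarrow> real) \<Rightarrow> bool" where
  "bernstein_rep n l V h \<longleftrightarrow> (\<exists>b. (\<forall>\<beta>. \<beta> \<notin> multi_idx n l \<longrightarrow> b \<beta> = 0) \<and>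
     (\<forall>x. in_Rn n x \<longrightarrow> h x = (\<Sum>\<beta>\<in>multi_idx n l. b \<beta> * bernstein n l \<beta> (bary n V x))))"

lemma bernstein_rep_cong: "bernstein_rep n l V h \<Longrightarrow> (\<And>x. in_Rn n x \<Longrightarrow> h x = h' x) \<Longrightarrow> bernstein_rep n l V h'"
  unfolding bernstein_rep_def by metis

lemma bernstein_rep_add: "bernstein_rep n l V h \<Longrightarrow> bernstein_rep n l V g \<Longrightarrow> bernstein_rep n l V (\<lambda>x. h x + g x)"
proof -
  assume "bernstein_rep n l V h" "bernstein_rep n l V g"
  then obtain b c where b: "\<forall>\<beta>. \<beta> \<notin> multi_idx n l \<longrightarrow> b \<beta> = 0"
      "\<forall>x. in_Rn n x \<longrightarrow> h x = (\<Sum>\<beta>\<in>multi_idx n l. b \<beta> * bernstein n l \<beta> (bary n V x))"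
    and c: "\<forall>\<beta>. \<beta> \<notin> multi_idx n l \<longrightarrow> c \<beta> = 0"
      "\<forall>x. in_Rn n x \<longrightarrow> g x = (\<Sum>\<beta>\<in>multi_idx n l. c \<beta> * bernstein n l \<beta> (bary n V x))"
    unfolding bernstein_rep_def by blast
  show ?thesis unfolding bernstein_rep_def
    by (rule exI[of _ "\<lambda>\<beta>. b \<beta> + c \<beta>"]) (use b c in \<open>auto simp: distrib_right sum.distrib\<close>)
qed

lemma bernstein_rep_scale: "bernstein_rep n l V h \<Longrightarrow> bernstein_rep n l V (\<lambda>x. u * h x)"
proof -
  assume "bernstein_rep n l V h"
  then obtain b where b: "\<forall>\<beta>. \<beta> \<notin> multi_idx n l \<longrightarrow> b \<beta> = 0"
      "\<forall>x. in_Rn n x \<longrightarrow> h x = (\<Sum>\<beta>\<in>multi_idx n l. b \<beta> * bernstein n l \<beta> (bary n V x))"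
    unfolding bernstein_rep_def by blast
  show ?thesis unfolding bernstein_rep_def
    by (rule exI[of _ "\<lambda>\<beta>. u * b \<beta>"]) (use b in \<open>auto simp: sum_distrib_left mult.assoc\<close>)
qed

lemma bernstein_rep_zero: "bernstein_rep n l V (\<lambda>_. 0)"
  unfolding bernstein_rep_def by (rule exI[of _ "\<lambda>_. 0"]) auto

lemma bernstein_rep_sum: "finite A \<Longrightarrow> (\<And>a. a \<in> A \<Longrightarrow> bernstein_rep n l V (f a)) \<Longrightarrow> bernstein_rep n l V (\<lambda>x. \<Sum>a\<in>A. f a x)"
proof (induction A rule: finite_induct)
  case empty thus ?case by (simp add: bernstein_rep_zero)
next
  case (insert a A)
  thus ?case using bernstein_rep_add[of n l V "f a" "\<lambda>x. \<Sum>a\<in>A. f a x"] by simp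
qed

lemma bernstein_rep_const: "bernstein_rep n 0 V (\<lambda>_. k)"
  unfolding bernstein_rep_def
  by (rule exI[of _ "\<lambda>\<beta>. if \<beta> = (\<lambda>_. 0) then k else 0"]) (auto simp: multi_idx_0 bernstein_0)

lemma sub_unit_add_unit: "sub_unit (add_unit \<beta> i) i = \<beta>"
  by (auto simp: sub_unit_def add_unit_def fun_eq_iff)

lemma bernstein_rep_mult_bary:
  assumes i: "i \<le> n" and r: "bernstein_rep n l V h"
  shows "bernstein_rep n (Suc l) V (\<lambda>x. bary n V x i * h x)"
proof -
  obtain b where b: "\<forall>\<beta>. \<beta> \<notin> multi_idx n l \<longrightarrow> b \<beta> = 0"
      "\<forall>x. in_Rn n x \<longrightarrow> h x = (\<Sum>\<beta>\<in>multi_idx n l. b \<beta> * bernstein n l \<beta> (bary n V x))"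
    using r unfolding bernstein_rep_def by blast
  define b' where "b' \<beta>' = (if \<beta>' \<in> multi_idx n (Suc l) then b (sub_unit \<beta>' i) * real (\<beta>' i) / (real l + 1) else 0)" for \<beta>'
  show ?thesis unfolding bernstein_rep_def
  proof (rule exI[of _ b'], intro conjI allI impI)
    fix \<beta>' show "\<beta>' \<notin> multi_idx n (Suc l) \<Longrightarrow> b' \<beta>' = 0" by (simp add: b'_def)
  next
    fix x :: pt assume x: "in_Rn n x"
    let ?w = "bary n V x"
    define H where "H \<beta>' = b' \<beta>' * bernstein n (Suc l) \<beta>' ?w" for \<beta>'
    have "bary n V x i * h x = (\<Sum>\<beta>\<in>multi_idx n l. b \<beta> * (?w i * bernstein n l \<beta> ?w))"
      using b(2) x by (simp add: sum_distrib_left mult.left_commute)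
    also have "\<dots> = (\<Sum>\<beta>\<in>multi_idx n l. H (add_unit \<beta> i))"
    proof (rule sum.cong[OF refl])
      fix \<beta> assume "\<beta> \<in> multi_idx n l"
      hence "add_unit \<beta> i \<in> multi_idx n (Suc l)" using i by (rule add_unit_multi_idx)
      thus "b \<beta> * (?w i * bernstein n l \<beta> ?w) = H (add_unit \<beta> i)"
        unfolding bary_mult_bernstein[OF i] H_def b'_def sub_unit_add_unit by (simp add: add_unit_def ehat_def)
    qed
    also have "\<dots> = (\<Sum>\<beta>'\<in>{\<beta>'\<in>multi_idx n (Suc l). \<beta>' i > 0}. H \<beta>')"
      by (rule sum_multi_idx_add_unit[OF i])
    also have "\<dots> = (\<Sum>\<beta>'\<in>multi_idx n (Suc l). H \<beta>')"
      by (rule sum.mono_neutral_left) (auto simp: multi_idx_finite H_def b'_def)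
    finally show "bary n V x i * h x = (\<Sum>\<beta>\<in>multi_idx n (Suc l). b' \<beta> * bernstein n (Suc l) \<beta> (bary n V x))"
      by (simp add: H_def)
  qed
qed

lemma bernstein_rep_Suc:
  assumes nd: "nondeg_simplex n V" and r: "bernstein_rep n l V h"
  shows "bernstein_rep n (Suc l) V h"
proof -
  have "bernstein_rep n (Suc l) V (\<lambda>x. \<Sum>i\<le>n. bary n V x i * h x)"
    by (rule bernstein_rep_sum) (auto intro: bernstein_rep_mult_bary r)
  moreover have "(\<Sum>i\<le>n. bary n V x i * h x) = h x" if "in_Rn n x" for x
    using bary_is_bary[OF nd that] by (simp add: is_bary_def flip: sum_distrib_right)
  ultimately show ?thesis by (rule bernstein_rep_cong)
qed

lemma bernstein_rep_mono:
  assumes nd: "nondeg_simplex n V" and r: "bernstein_rep n d V h" and le: "d \<le> l"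
  shows "bernstein_rep n l V h"
  using le
proof (induction l)
  case 0 thus ?case using r by simp
next
  case (Suc l)
  show ?case
  proof (cases "d = Suc l")
    case True thus ?thesis using r by simp
  next
    case False thus ?thesis using Suc bernstein_rep_Suc[OF nd] by simp
  qed
qed

lemma bernstein_rep_mult_coord:
  assumes nd: "nondeg_simplex n V" and r: "bernstein_rep n l V h"
  shows "bernstein_rep n (Suc l) V (\<lambda>x. x k * h x)"
proof -
  have "bernstein_rep n (Suc l) V (\<lambda>x. \<Sum>i\<le>n. V i k * (bary n V x i * h x))"
  proof (rule bernstein_rep_sum)
    fix i assume "i \<in> {..n}"
    thus "bernstein_rep n (Suc l) V (\<lambda>x. V i k * (bary n V x i * h x))"
      by (intro bernstein_rep_scale[OF bernstein_rep_mult_bary[OF _ r]]) simp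
  qed simp
  moreover have "(\<Sum>i\<le>n. V i k * (bary n V x i * h x)) = x k * h x" if "in_Rn n x" for x
  proof -
    have "(\<Sum>i\<le>n. V i k * (bary n V x i * h x)) = (\<Sum>i\<le>n. bary n V x i * V i k) * h x"
      by (simp add: sum_distrib_left sum_distrib_right mult_ac)
    also have "(\<Sum>i\<le>n. bary n V x i * V i k) = x k"
      using bary_is_bary[OF nd that] unfolding is_bary_def by blast
    finally show ?thesis .
  qed
  ultimately show ?thesis by (rule bernstein_rep_cong)
qed

lemma bernstein_rep_mult_power:
  assumes nd: "nondeg_simplex n V" and r: "bernstein_rep n d V g"
  shows "bernstein_rep n (d + e) V (\<lambda>x. g x * x k ^ e)"
proof (induction e)
  case 0 thus ?case using r by simp
next
  case (Suc e)
  have "bernstein_rep n (Suc (d + e)) V (\<lambda>x. x k * (g x * x k ^ e))" by (rule bernstein_rep_mult_coord[OF nd Suc])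
  thus ?case by (simp add: mult_ac)
qed

lemma bernstein_rep_monomial:
  assumes nd: "nondeg_simplex n V"
  shows "bernstein_rep n (\<Sum>i<m. \<alpha> i) V (\<lambda>x. \<Prod>i<m. x i ^ \<alpha> i)"
proof (induction m)
  case 0 thus ?case using bernstein_rep_const[of n V 1] by simp
next
  case (Suc m)
  have "bernstein_rep n ((\<Sum>i<m. \<alpha> i) + \<alpha> m) V (\<lambda>x. (\<Prod>i<m. x i ^ \<alpha> i) * x m ^ \<alpha> m)"
    by (rule bernstein_rep_mult_power[OF nd Suc])
  thus ?case by simp
qed

lemma bernstein_rep_poly:
  assumes nd: "nondeg_simplex n V" and p: "is_poly n l p"
  shows "bernstein_rep n l V p"
proof -
  obtain c where c: "\<forall>x. in_Rn n x \<longrightarrow>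
     p x = (\<Sum>\<alpha>\<in>{\<alpha>. (\<forall>i\<ge>n. \<alpha> i = 0) \<and> (\<Sum>i<n. \<alpha> i) \<le> l}. c \<alpha> * (\<Prod>i<n. x i ^ \<alpha> i))"
    using p unfolding is_poly_def by blast
  have eqP: "{\<alpha>. (\<forall>i\<ge>n. \<alpha> i = 0) \<and> (\<Sum>i<n. \<alpha> i) \<le> l} = monomial_exps n l" by (simp add: monomial_exps_def)
  have "bernstein_rep n l V (\<lambda>x. \<Sum>\<alpha>\<in>monomial_exps n l. c \<alpha> * (\<Prod>i<n. x i ^ \<alpha> i))"
  proof (rule bernstein_rep_sum[OF monomial_exps_finite])
    fix \<alpha> assume a: "\<alpha> \<in> monomial_exps n l"
    show "bernstein_rep n l V (\<lambda>x. c \<alpha> * (\<Prod>i<n. x i ^ \<alpha> i))"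
      by (rule bernstein_rep_scale, rule bernstein_rep_mono[OF nd bernstein_rep_monomial[OF nd]]) (use a in \<open>auto simp: monomial_exps_def\<close>)
  qed
  thus ?thesis by (rule bernstein_rep_cong) (use c eqP in auto)
qed

lemma bernstein_divide:
  assumes "\<beta> \<in> multi_idx n l" "\<And>i. i \<le> n \<Longrightarrow> mu i = lam i / s"
  shows "bernstein n l \<beta> mu = bernstein n l \<beta> lam / s ^ l"
proof -
  have "(\<Prod>i\<le>n. mu i ^ \<beta> i) = (\<Prod>i\<le>n. lam i ^ \<beta> i / s ^ \<beta> i)"
    using assms(2) by (intro prod.cong) (auto simp: power_divide)
  also have "\<dots> = (\<Prod>i\<le>n. lam i ^ \<beta> i) / (\<Prod>i\<le>n. s ^ \<beta> i)"
    by (rule prod_dividef)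
  also have "(\<Prod>i\<le>n. s ^ \<beta> i) = s ^ l"
    using assms(1) by (simp add: power_sum[symmetric] multi_idx_def)
  finally show ?thesis by (simp add: bernstein_def)
qed

lemma bernstein_coeffs_unique:
  assumes nd: "nondeg_simplex n V"
    and z: "\<forall>x. in_Rn n x \<longrightarrow> (\<Sum>\<beta>\<in>multi_idx n l. b \<beta> * bernstein n l \<beta> (bary n V x)) = 0"
    and bm: "\<beta> \<in> multi_idx n l"
  shows "b \<beta> = 0"
proof -
  define F where "F \<beta> = fact l / (\<Prod>i\<le>n. fact (\<beta> i) :: real)" for \<beta>
  have Fpos: "F \<beta> > 0" for \<beta> unfolding F_def by (intro divide_pos_pos prod_pos) auto
  define a where "a \<beta> = (if \<beta> \<in> multi_idx n l then b \<beta> * F \<beta> else 0)" for \<beta>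
  have sub: "multi_idx n l \<subseteq> monomial_exps (Suc n) l"
    by (auto simp: multi_idx_def monomial_exps_def lessThan_Suc_atMost)
  have "a \<beta> = 0"
  proof (rule coeff_zero_if_zero_on_pos_orthant[OF _ subsetD[OF sub bm]], intro allI impI)
    fix lam :: "nat \<Rightarrow> real" assume pos: "\<forall>i<Suc n. 0 < lam i"
    define s where "s = (\<Sum>i\<le>n. lam i)"
    have s0: "s > 0" unfolding s_def using pos by (intro sum_pos) auto
    define mu where "mu i = (if i \<le> n then lam i / s else 0)" for i
    define x where "x = (\<lambda>k. \<Sum>i\<le>n. mu i * V i k)"
    have xR: "in_Rn n x"
      using nd unfolding in_Rn_def x_def nondeg_simplex_def by auto
    have "is_bary n V x mu"
      unfolding is_bary_def
    proof (intro conjI allI impI)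
      show "mu i = 0" if "n < i" for i using that by (simp add: mu_def)
      have "(\<Sum>i\<le>n. mu i) = (\<Sum>i\<le>n. lam i) / s" by (simp add: mu_def sum_divide_distrib)
      thus "(\<Sum>i\<le>n. mu i) = 1" using s0 by (simp add: s_def)
      show "(\<Sum>i\<le>n. mu i * V i k) = x k" for k by (simp add: x_def)
    qed
    hence bx: "bary n V x = mu" by (rule bary_eqI[OF nd])
    have Bmu: "bernstein n l \<beta> mu = F \<beta> * (\<Prod>i\<le>n. lam i ^ \<beta> i) / s ^ l" if "\<beta> \<in> multi_idx n l" for \<beta>
      using bernstein_divide[OF that, of mu lam s] by (simp add: mu_def bernstein_def F_def)
    have "(\<Sum>\<beta>\<in>monomial_exps (Suc n) l. a \<beta> * (\<Prod>i<Suc n. lam i ^ \<beta> i)) =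
          (\<Sum>\<beta>\<in>multi_idx n l. a \<beta> * (\<Prod>i<Suc n. lam i ^ \<beta> i))"
      by (rule sum.mono_neutral_right[OF monomial_exps_finite sub]) (auto simp: a_def)
    also have "\<dots> = s ^ l * (\<Sum>\<beta>\<in>multi_idx n l. b \<beta> * bernstein n l \<beta> mu)"
      unfolding sum_distrib_left
    proof (rule sum.cong[OF refl])
      fix \<beta> assume "\<beta> \<in> multi_idx n l"
      thus "a \<beta> * (\<Prod>i<Suc n. lam i ^ \<beta> i) = s ^ l * (b \<beta> * bernstein n l \<beta> mu)"
        using s0 by (simp add: Bmu a_def lessThan_Suc_atMost)
    qed
    also have "(\<Sum>\<beta>\<in>multi_idx n l. b \<beta> * bernstein n l \<beta> mu) = 0"
      using z xR bx by metis
    finally show "(\<Sum>\<beta>\<in>monomial_exps (Suc n) l. a \<beta> * (\<Prod>i<Suc n. lam i ^ \<beta> i)) = 0" by simp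
  qed
  thus ?thesis using bm Fpos[of \<beta>] by (simp add: a_def)
qed

lemma bcoef_eqI:
  assumes nd: "nondeg_simplex n V"
    and b0: "\<forall>\<beta>. \<beta> \<notin> multi_idx n l \<longrightarrow> b \<beta> = 0"
    and br: "\<forall>x. in_Rn n x \<longrightarrow> h x = (\<Sum>\<beta>\<in>multi_idx n l. b \<beta> * bernstein n l \<beta> (bary n V x))"
  shows "bcoef n h l V = b"
  unfolding bcoef_def
proof (rule the_equality)
  show "(\<forall>\<alpha>. \<alpha> \<notin> multi_idx n l \<longrightarrow> b \<alpha> = 0) \<and>
    (\<forall>x. in_Rn n x \<longrightarrow> h x = (\<Sum>\<alpha>\<in>multi_idx n l. b \<alpha> * bernstein n l \<alpha> (bary n V x)))"
    using b0 br by blast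
next
  fix b' assume b': "(\<forall>\<alpha>. \<alpha> \<notin> multi_idx n l \<longrightarrow> b' \<alpha> = 0) \<and>
    (\<forall>x. in_Rn n x \<longrightarrow> h x = (\<Sum>\<alpha>\<in>multi_idx n l. b' \<alpha> * bernstein n l \<alpha> (bary n V x)))"
  have "\<forall>x. in_Rn n x \<longrightarrow> (\<Sum>\<beta>\<in>multi_idx n l. (b' \<beta> - b \<beta>) * bernstein n l \<beta> (bary n V x)) = 0"
    using b' br by (simp add: left_diff_distrib sum_subtractf)
  hence "b' \<beta> - b \<beta> = 0" if "\<beta> \<in> multi_idx n l" for \<beta>
    using bernstein_coeffs_unique[OF nd _ that, of "\<lambda>\<beta>. b' \<beta> - b \<beta>"] by simp
  thus "b' = b" using b' b0 by (auto simp: fun_eq_iff) (metis eq_iff_diff_eq_0)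
qed

lemma bcoef_expansion:
  assumes nd: "nondeg_simplex n V" and r: "bernstein_rep n l V h"
  shows "\<forall>\<beta>. \<beta> \<notin> multi_idx n l \<longrightarrow> bcoef n h l V \<beta> = 0"
    and "\<forall>x. in_Rn n x \<longrightarrow> h x = (\<Sum>\<beta>\<in>multi_idx n l. bcoef n h l V \<beta> * bernstein n l \<beta> (bary n V x))"
proof -
  obtain b where b: "\<forall>\<beta>. \<beta> \<notin> multi_idx n l \<longrightarrow> b \<beta> = 0"
      "\<forall>x. in_Rn n x \<longrightarrow> h x = (\<Sum>\<beta>\<in>multi_idx n l. b \<beta> * bernstein n l \<beta> (bary n V x))"
    using r unfolding bernstein_rep_def by blast
  have "bcoef n h l V = b" by (rule bcoef_eqI[OF nd b])
  thus "\<forall>\<beta>. \<beta> \<notin> multi_idx n l \<longrightarrow> bcoef n h l V \<beta> = 0"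
    "\<forall>x. in_Rn n x \<longrightarrow> h x = (\<Sum>\<beta>\<in>multi_idx n l. bcoef n h l V \<beta> * bernstein n l \<beta> (bary n V x))"
    using b by auto
qed

section \<open>Change of simplex by blossoming\<close>

definition std_bary :: "nat \<Rightarrow> pt \<Rightarrow> nat \<Rightarrow> real" where
  "std_bary n x = (\<lambda>i. if i = 0 then 1 - (\<Sum>k<n. x k) else if i \<le> n then x (i - 1) else 0)"

lemma in_Rn_std_simplex: "i \<le> n \<Longrightarrow> in_Rn n (std_simplex i)"
  by (auto simp: in_Rn_def std_simplex_def)

lemma sum_atMost_shift: "(\<Sum>i\<le>n. (f :: nat \<Rightarrow> real) i) = f 0 + (\<Sum>k<n. f (Suc k))"
  by (induction n) (simp_all add: add.assoc)

lemma nondeg_std_simplex: "nondeg_simplex n std_simplex"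
  unfolding nondeg_simplex_def
proof (intro conjI allI impI)
  show "in_Rn n (std_simplex i)" if "i \<le> n" for i using that by (rule in_Rn_std_simplex)
next
  fix c :: "nat \<Rightarrow> real" and i
  assume h: "(\<Sum>i\<le>n. c i) = 0 \<and> (\<forall>k. (\<Sum>i\<le>n. c i * std_simplex i k) = 0)" and i: "i \<le> n"
  have ck: "c (Suc k) = 0" if "k < n" for k
  proof -
    have "(\<Sum>i\<le>n. c i * std_simplex i k) = (\<Sum>i\<le>n. if i = Suc k then c i else 0)"
      by (intro sum.cong) (auto simp: std_simplex_def)
    also have "\<dots> = c (Suc k)" using that by (simp add: sum.delta)
    finally show ?thesis using h by simp
  qed
  have "(\<Sum>i\<le>n. c i) = c 0 + (\<Sum>k<n. c (Suc k))" by (rule sum_atMost_shift)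
  hence c0: "c 0 = 0" using h ck by simp
  show "c i = 0"
  proof (cases i)
    case 0 thus ?thesis using c0 by simp
  next
    case (Suc k) thus ?thesis using ck i by simp
  qed
qed

lemma std_bary_is_bary:
  assumes x: "in_Rn n x"
  shows "is_bary n std_simplex x (std_bary n x)"
  unfolding is_bary_def
proof (intro conjI allI impI)
  show "std_bary n x i = 0" if "n < i" for i using that by (simp add: std_bary_def)
  have "(\<Sum>i\<le>n. std_bary n x i) = std_bary n x 0 + (\<Sum>k<n. std_bary n x (Suc k))" by (rule sum_atMost_shift)
  thus "(\<Sum>i\<le>n. std_bary n x i) = 1" by (simp add: std_bary_def)
  fix k
  have "(\<Sum>i\<le>n. std_bary n x i * std_simplex i k) =
        std_bary n x 0 * std_simplex 0 k + (\<Sum>j<n. std_bary n x (Suc j) * std_simplex (Suc j) k)"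
    by (rule sum_atMost_shift)
  also have "\<dots> = (\<Sum>j<n. if j = k then x j else 0)"
  proof -
    have "std_bary n x 0 * std_simplex 0 k = 0" by (simp add: std_simplex_def)
    moreover have "std_bary n x (Suc j) * std_simplex (Suc j) k = (if j = k then x j else 0)" if "j < n" for j
      using that by (simp add: std_bary_def std_simplex_def)
    ultimately show ?thesis by simp
  qed
  also have "\<dots> = x k" using x by (auto simp: in_Rn_def sum.delta)
  finally show "(\<Sum>i\<le>n. std_bary n x i * std_simplex i k) = x k" .
qed

lemma bary_std_simplex: "in_Rn n x \<Longrightarrow> bary n std_simplex x = std_bary n x"
  by (rule bary_eqI[OF nondeg_std_simplex std_bary_is_bary])

lemma bary_affine_comb:
  assumes W: "nondeg_simplex n W" and v: "\<And>i. i \<le> n \<Longrightarrow> in_Rn n (v i)"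
    and w: "(\<Sum>i\<le>n. w i) = 1"
  shows "bary n W (\<lambda>k. \<Sum>i\<le>n. w i * v i k) = (\<lambda>a. \<Sum>i\<le>n. w i * bary n W (v i) a)"
proof (rule bary_eqI[OF W])
  have P: "is_bary n W (v i) (bary n W (v i))" if "i \<le> n" for i by (rule bary_is_bary[OF W v[OF that]])
  show "is_bary n W (\<lambda>k. \<Sum>i\<le>n. w i * v i k) (\<lambda>a. \<Sum>i\<le>n. w i * bary n W (v i) a)"
    unfolding is_bary_def
  proof (intro conjI allI impI)
    show "(\<Sum>i\<le>n. w i * bary n W (v i) a) = 0" if "n < a" for a
      using P that by (simp add: is_bary_def)
    have "(\<Sum>a\<le>n. \<Sum>i\<le>n. w i * bary n W (v i) a) = (\<Sum>i\<le>n. \<Sum>a\<le>n. w i * bary n W (v i) a)"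
      by (rule sum.swap)
    also have "\<dots> = (\<Sum>i\<le>n. w i)"
      using P by (intro sum.cong) (simp_all add: is_bary_def flip: sum_distrib_left)
    finally show "(\<Sum>a\<le>n. \<Sum>i\<le>n. w i * bary n W (v i) a) = 1" using w by simp
    fix k
    have "(\<Sum>a\<le>n. (\<Sum>i\<le>n. w i * bary n W (v i) a) * W a k) = (\<Sum>a\<le>n. \<Sum>i\<le>n. w i * (bary n W (v i) a * W a k))"
      by (simp add: sum_distrib_right mult.assoc)
    also have "\<dots> = (\<Sum>i\<le>n. \<Sum>a\<le>n. w i * (bary n W (v i) a * W a k))" by (rule sum.swap)
    also have "\<dots> = (\<Sum>i\<le>n. w i * v i k)"
      using P by (intro sum.cong) (simp_all add: is_bary_def flip: sum_distrib_left)
    finally show "(\<Sum>a\<le>n. (\<Sum>i\<le>n. w i * bary n W (v i) a) * W a k) = (\<Sum>i\<le>n. w i * v i k)" .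
  qed
qed

lemma bary_change_simplex:
  assumes V: "nondeg_simplex n V" and W: "nondeg_simplex n W" and x: "in_Rn n x"
  shows "bary n W x = (\<lambda>a. \<Sum>i\<le>n. bary n V x i * bary n W (V i) a)"
proof -
  have P: "is_bary n V x (bary n V x)" by (rule bary_is_bary[OF V x])
  have "x = (\<lambda>k. \<Sum>i\<le>n. bary n V x i * V i k)" using P by (auto simp: is_bary_def fun_eq_iff)
  hence "bary n W x = bary n W (\<lambda>k. \<Sum>i\<le>n. bary n V x i * V i k)" by simp
  also have "\<dots> = (\<lambda>a. \<Sum>i\<le>n. bary n V x i * bary n W (V i) a)"
    by (rule bary_affine_comb[OF W]) (use V P in \<open>auto simp: nondeg_simplex_def is_bary_def\<close>)
  finally show ?thesis .
qed

lemma bcoef_eq_blossom: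
  assumes V: "nondeg_simplex n V" and g: "is_poly n l g"
  shows "bcoef n g l V = (\<lambda>\<beta>. if \<beta> \<in> multi_idx n l then
           blossom n (bcoef n g l std_simplex) (blossom_args n (\<lambda>i. bary n std_simplex (V i)) \<beta>) else 0)"
proof (rule bcoef_eqI[OF V])
  show "\<forall>\<beta>. \<beta> \<notin> multi_idx n l \<longrightarrow> (if \<beta> \<in> multi_idx n l then blossom n (bcoef n g l std_simplex) (blossom_args n (\<lambda>i. bary n std_simplex (V i)) \<beta>) else 0) = 0"
    by simp
  let ?c = "bcoef n g l std_simplex"
  let ?\<mu> = "\<lambda>i. bary n std_simplex (V i)"
  have cr: "\<forall>x. in_Rn n x \<longrightarrow> g x = (\<Sum>\<beta>\<in>multi_idx n l. ?c \<beta> * bernstein n l \<beta> (bary n std_simplex x))"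
    using bcoef_expansion(2)[OF nondeg_std_simplex bernstein_rep_poly[OF nondeg_std_simplex g]] .
  show "\<forall>x. in_Rn n x \<longrightarrow> g x = (\<Sum>\<beta>\<in>multi_idx n l. (if \<beta> \<in> multi_idx n l then blossom n ?c (blossom_args n ?\<mu> \<beta>) else 0) * bernstein n l \<beta> (bary n V x))"
  proof (intro allI impI)
    fix x :: pt assume x: "in_Rn n x"
    have "g x = blossom n ?c (replicate l (bary n std_simplex x))"
      using cr x by (simp add: blossom_replicate)
    also have "bary n std_simplex x = (\<lambda>a. \<Sum>i\<le>n. bary n V x i * ?\<mu> i a)"
      by (rule bary_change_simplex[OF V nondeg_std_simplex x])
    also have "blossom n ?c (replicate l (\<lambda>a. \<Sum>i\<le>n. bary n V x i * ?\<mu> i a)) =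
       (\<Sum>\<beta>\<in>multi_idx n l. bernstein n l \<beta> (bary n V x) * blossom n ?c (blossom_args n ?\<mu> \<beta>))"
      by (rule blossom_replicate_comb)
    finally show "g x = (\<Sum>\<beta>\<in>multi_idx n l. (if \<beta> \<in> multi_idx n l then blossom n ?c (blossom_args n ?\<mu> \<beta>) else 0) * bernstein n l \<beta> (bary n V x))"
      by (simp add: mult.commute)
  qed
qed

section \<open>Geometry of simplices and subdivisions\<close>

lemma simplex_set_props:
  assumes V: "nondeg_simplex n V" and x: "x \<in> simplex_set n V"
  shows "in_Rn n x" "prob_vec n (bary n V x)"
proof -
  obtain mu where mu: "\<forall>i\<le>n. mu i \<ge> 0" "(\<Sum>i\<le>n. mu i) = 1" "x = (\<lambda>k. \<Sum>i\<le>n. mu i * V i k)"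
    using x unfolding simplex_set_def by blast
  show xr: "in_Rn n x" using V mu(3) unfolding nondeg_simplex_def in_Rn_def by auto
  define mu' where "mu' i = (if i \<le> n then mu i else 0)" for i
  have "is_bary n V x mu'" unfolding is_bary_def using mu by (auto simp: mu'_def)
  hence "bary n V x = mu'" by (rule bary_eqI[OF V])
  thus "prob_vec n (bary n V x)" using mu by (auto simp: prob_vec_def mu'_def)
qed

lemma vertex_in_simplex_set: "i \<le> n \<Longrightarrow> V i \<in> simplex_set n V"
  unfolding simplex_set_def
proof (rule CollectI, rule exI[of _ "\<lambda>j. if j = i then 1 else 0"], intro conjI)
  assume i: "i \<le> n"
  have "(\<Sum>j\<le>n. (if j = i then 1 else 0) * V j k) = V i k" for k
  proof -
    have "(\<Sum>j\<le>n. (if j = i then 1 else 0) * V j k) = (\<Sum>j\<le>n. if j = i then V i k else 0)"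
      by (intro sum.cong) auto
    thus ?thesis using i by simp
  qed
  thus "V i = (\<lambda>k. \<Sum>j\<le>n. (if j = i then 1 else 0) * V j k)" by auto
  show "(\<Sum>j\<le>n. if j = i then 1 else 0 :: real) = 1" using i by simp
qed auto

lemma set_blossom_args: "set (blossom_args n \<mu> \<beta>) \<subseteq> \<mu> ` {..n}"
  by (auto simp: blossom_args_def)

lemma sum_list_concat: "sum_list (concat xss) = sum_list (map sum_list xss)"
  by (induction xss) auto

lemma sum_list_blossom_args: "sum_list (map f (blossom_args n \<mu> \<beta>)) = (\<Sum>i\<le>n. real (\<beta> i) * f (\<mu> i))"
proof -
  have "sum_list (map f (blossom_args n \<mu> \<beta>)) = sum_list (map (\<lambda>i. sum_list (map f (replicate (\<beta> i) (\<mu> i)))) [0..<Suc n])"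
    unfolding blossom_args_def by (simp add: map_concat sum_list_concat comp_def)
  also have "\<dots> = (\<Sum>i\<le>n. real (\<beta> i) * f (\<mu> i))"
    unfolding sum_list_upt_Suc by (simp add: sum_list_replicate)
  finally show ?thesis .
qed

lemma centroid_blossom_args:
  assumes "\<alpha> \<in> multi_idx n l"
  shows "centroid (blossom_args n \<mu> \<alpha>) = (\<lambda>a. \<Sum>i\<le>n. (real (\<alpha> i) / real l) * \<mu> i a)"
  using assms by (auto simp: centroid_def sum_list_blossom_args length_blossom_args multi_idx_def fun_eq_iff sum_divide_distrib)

lemma weighted_variance_eq:
  fixes w z :: "nat \<Rightarrow> real"
  assumes L: "(\<Sum>i\<in>I. w i) = L" "L > 0" and fin: "finite I"
  shows "(\<Sum>i\<in>I. w i * (z i - (\<Sum>j\<in>I. w j * z j) / L)^2) =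
         (\<Sum>i\<in>I. \<Sum>j\<in>I. w i * w j * (z i - z j)^2) / (2 * L)"
proof -
  define S1 where "S1 = (\<Sum>j\<in>I. w j * z j)"
  define S2 where "S2 = (\<Sum>j\<in>I. w j * (z j)^2)"
  have "(\<Sum>i\<in>I. w i * (z i - S1 / L)^2) = (\<Sum>i\<in>I. w i * (z i)^2 - 2 * (S1 / L) * (w i * z i) + (S1/L)^2 * w i)"
    by (intro sum.cong) (auto simp: power2_eq_square algebra_simps)
  also have "\<dots> = S2 - 2 * (S1 / L) * S1 + (S1/L)^2 * L"
  proof -
    have "(\<Sum>i\<in>I. (S1/L)^2 * w i) = (S1/L)^2 * L" by (simp add: sum_distrib_left[symmetric] L)
    moreover have "(\<Sum>i\<in>I. 2 * (S1 / L) * (w i * z i)) = 2 * (S1 / L) * S1"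
      unfolding sum_distrib_left[symmetric] S1_def ..
    ultimately show ?thesis by (simp add: sum.distrib sum_subtractf S2_def)
  qed
  also have "\<dots> = S2 - S1^2 / L" using L by (simp add: power2_eq_square field_simps)
  finally have lhs: "(\<Sum>i\<in>I. w i * (z i - S1 / L)^2) = S2 - S1^2 / L" .
  have "(\<Sum>i\<in>I. \<Sum>j\<in>I. w i * w j * (z i - z j)^2) = (\<Sum>i\<in>I. w i * (z i)^2 * L - 2 * (w i * z i) * S1 + w i * S2)"
  proof (rule sum.cong[OF refl])
    fix i assume "i \<in> I"
    have "(\<Sum>j\<in>I. w i * w j * (z i - z j)^2) = (\<Sum>j\<in>I. w i * (z i)^2 * w j - 2 * (w i * z i) * (w j * z j) + w i * (w j * (z j)^2))"
      by (intro sum.cong) (auto simp: power2_eq_square algebra_simps)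
    also have "\<dots> = w i * (z i)^2 * L - 2 * (w i * z i) * S1 + w i * S2"
    proof -
      have a1: "(\<Sum>j\<in>I. w i * (z i)^2 * w j) = w i * (z i)^2 * L" unfolding sum_distrib_left[symmetric] L ..
      have a2: "(\<Sum>j\<in>I. 2 * (w i * z i) * (w j * z j)) = 2 * (w i * z i) * S1" unfolding sum_distrib_left[symmetric] S1_def ..
      have a3: "(\<Sum>j\<in>I. w i * (w j * (z j)^2)) = w i * S2" unfolding sum_distrib_left[symmetric] S2_def ..
      show ?thesis unfolding sum.distrib sum_subtractf a1 a2 a3 ..
    qed
    finally show "(\<Sum>j\<in>I. w i * w j * (z i - z j)^2) = w i * (z i)^2 * L - 2 * (w i * z i) * S1 + w i * S2" .
  qed
  also have "\<dots> = S2 * L - 2 * S1 * S1 + L * S2"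
  proof -
    have a1: "(\<Sum>i\<in>I. w i * (z i)^2 * L) = S2 * L" unfolding sum_distrib_right[symmetric] S2_def ..
    have a2: "(\<Sum>i\<in>I. 2 * (w i * z i) * S1) = 2 * S1 * S1"
      unfolding sum_distrib_right[symmetric] sum_distrib_left[symmetric] S1_def by simp
    have a3: "(\<Sum>i\<in>I. w i * S2) = L * S2" unfolding sum_distrib_right[symmetric] L ..
    show ?thesis unfolding sum.distrib sum_subtractf a1 a2 a3 ..
  qed
  finally have rhs: "(\<Sum>i\<in>I. \<Sum>j\<in>I. w i * w j * (z i - z j)^2) = 2 * L * S2 - 2 * S1^2"
    by (simp add: power2_eq_square algebra_simps)
  show ?thesis unfolding lhs rhs S1_def[symmetric] using L by (simp add: field_simps)
qed

lemma weighted_variance_le: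
  fixes w :: "nat \<Rightarrow> real" and \<mu> :: "nat \<Rightarrow> nat \<Rightarrow> real"
  assumes L: "(\<Sum>i\<in>I. w i) = L" "L > 0" and fin: "finite I" "finite A"
    and w0: "\<And>i. i \<in> I \<Longrightarrow> w i \<ge> 0"
    and D: "\<And>i j. i \<in> I \<Longrightarrow> j \<in> I \<Longrightarrow> (\<Sum>a\<in>A. (\<mu> i a - \<mu> j a)^2) \<le> D2"
  shows "(\<Sum>a\<in>A. \<Sum>i\<in>I. w i * (\<mu> i a - (\<Sum>j\<in>I. w j * \<mu> j a) / L)^2) \<le> L / 2 * D2"
proof -
  have "(\<Sum>a\<in>A. \<Sum>i\<in>I. w i * (\<mu> i a - (\<Sum>j\<in>I. w j * \<mu> j a) / L)^2) =
        (\<Sum>a\<in>A. (\<Sum>i\<in>I. \<Sum>j\<in>I. w i * w j * (\<mu> i a - \<mu> j a)^2) / (2 * L))"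
    by (intro sum.cong refl weighted_variance_eq[OF L fin(1)])
  also have "\<dots> = (\<Sum>i\<in>I. \<Sum>j\<in>I. w i * w j * (\<Sum>a\<in>A. (\<mu> i a - \<mu> j a)^2)) / (2 * L)"
    by (simp add: sum_divide_distrib[symmetric] sum_distrib_left sum.swap[of _ A I] sum.swap[of _ A I])
  also have "\<dots> \<le> (\<Sum>i\<in>I. \<Sum>j\<in>I. w i * w j * D2) / (2 * L)"
    using L w0 D by (intro divide_right_mono sum_mono mult_left_mono) auto
  also have "\<dots> = L / 2 * D2"
    using L by (simp add: sum_distrib_right[symmetric] sum_distrib_left[symmetric] power2_eq_square field_simps)
  finally show ?thesis .
qed

lemma simplex_set_coord_bound:
  assumes x: "x \<in> simplex_set n V"
  shows "\<bar>x k\<bar> \<le> (\<Sum>i\<le>n. \<bar>V i k\<bar>)"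
proof -
  obtain mu where mu: "\<forall>i\<le>n. mu i \<ge> 0" "(\<Sum>i\<le>n. mu i) = 1" "x = (\<lambda>k. \<Sum>i\<le>n. mu i * V i k)"
    using x unfolding simplex_set_def by blast
  have le1: "mu i \<le> 1" if "i \<le> n" for i
    using member_le_sum[of i "{..n}" mu] mu that by auto
  have "\<bar>x k\<bar> \<le> (\<Sum>i\<le>n. \<bar>mu i * V i k\<bar>)" using mu(3) by (simp add: sum_abs)
  also have "\<dots> \<le> (\<Sum>i\<le>n. \<bar>V i k\<bar>)"
  proof (rule sum_mono)
    fix i assume "i \<in> {..n}"
    hence "\<bar>mu i\<bar> \<le> 1" using mu le1 by auto
    thus "\<bar>mu i * V i k\<bar> \<le> \<bar>V i k\<bar>" by (simp add: abs_mult mult_left_le_one_le)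
  qed
  finally show ?thesis .
qed

lemma bdd_above_simplex_dists: "bdd_above {dist_n n x y | x y. x \<in> simplex_set n V \<and> y \<in> simplex_set n V}"
proof -
  define b where "b k = (\<Sum>i\<le>n. \<bar>V i k\<bar>)" for k
  have "dist_n n x y \<le> sqrt (\<Sum>k<n. (2 * b k)^2)" if "x \<in> simplex_set n V" "y \<in> simplex_set n V" for x y
    unfolding dist_n_def
  proof (rule real_sqrt_le_mono, rule sum_mono)
    fix k
    have "\<bar>x k - y k\<bar> \<le> 2 * b k" using simplex_set_coord_bound[OF that(1), of k] simplex_set_coord_bound[OF that(2), of k]
      by (simp add: b_def)
    hence "\<bar>x k - y k\<bar>^2 \<le> (2 * b k)^2" by (rule power_mono) simp
    thus "(x k - y k)^2 \<le> (2 * b k)^2" by simp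
  qed
  thus ?thesis unfolding bdd_above_def by blast
qed

lemma dist_n_le_diam_simplex:
  assumes "x \<in> simplex_set n V" "y \<in> simplex_set n V"
  shows "dist_n n x y \<le> diam_simplex n V"
  unfolding diam_simplex_def diam_n_def
  by (rule cSup_upper[OF _ bdd_above_simplex_dists]) (use assms in blast)

lemma diam_simplex_nonneg: "diam_simplex n V \<ge> 0"
proof -
  have "dist_n n (V 0) (V 0) \<le> diam_simplex n V" by (rule dist_n_le_diam_simplex) (auto intro: vertex_in_simplex_set)
  moreover have "dist_n n (V 0) (V 0) = 0" by (simp add: dist_n_def)
  ultimately show ?thesis by simp
qed

lemma std_simplex_coords:
  assumes "x \<in> simplex_set n std_simplex"
  shows "\<forall>k<n. x k \<ge> 0 \<and> x k \<le> 1" "(\<Sum>k<n. x k) \<le> 1"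
proof -
  obtain mu where mu: "\<forall>i\<le>n. mu i \<ge> 0" "(\<Sum>i\<le>n. mu i) = 1" "x = (\<lambda>k. \<Sum>i\<le>n. mu i * std_simplex i k)"
    using assms unfolding simplex_set_def by blast
  have xk: "x k = mu (Suc k)" if "k < n" for k
  proof -
    have pw: "mu i * std_simplex i k = (if i = Suc k then mu i else 0)" for i
      by (cases i) (auto simp: std_simplex_def)
    have "x k = (\<Sum>i\<le>n. if i = Suc k then mu i else 0)"
      using mu(3) pw by simp
    thus ?thesis using that by (simp add: sum.delta)
  qed
  have s: "(\<Sum>k<n. x k) = (\<Sum>k<n. mu (Suc k))" using xk by simp
  have "(\<Sum>i\<le>n. mu i) = mu 0 + (\<Sum>k<n. mu (Suc k))" by (rule sum_atMost_shift)
  hence s1: "(\<Sum>k<n. x k) \<le> 1" using mu s by auto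
  show "(\<Sum>k<n. x k) \<le> 1" by (rule s1)
  show "\<forall>k<n. x k \<ge> 0 \<and> x k \<le> 1"
  proof (intro allI impI conjI)
    fix k assume k: "k < n"
    show "x k \<ge> 0" using xk[OF k] mu(1) k by auto
    have "x k \<le> (\<Sum>k<n. x k)"
      by (rule member_le_sum) (use k xk mu(1) in auto)
    thus "x k \<le> 1" using s1 by simp
  qed
qed

lemma diam_std_simplex_sq_le: "(diam_simplex n std_simplex)^2 \<le> min (real n) 2"
proof -
  have d: "dist_n n x y \<le> sqrt (min (real n) 2)" if "x \<in> simplex_set n std_simplex" "y \<in> simplex_set n std_simplex" for x y
    unfolding dist_n_def
  proof (rule real_sqrt_le_mono)
    note cx = std_simplex_coords[OF that(1)] and cy = std_simplex_coords[OF that(2)]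
    show "(\<Sum>k<n. (x k - y k)^2) \<le> min (real n) 2"
    proof (cases "n \<le> 1")
      case True
      have "(x k - y k)^2 \<le> 1" if "k < n" for k
      proof -
        have "0 \<le> x k" "x k \<le> 1" "0 \<le> y k" "y k \<le> 1" using cx cy that by auto
        hence "\<bar>x k - y k\<bar> \<le> 1" by linarith
        hence "\<bar>x k - y k\<bar>^2 \<le> 1^2" by (rule power_mono) simp
        thus ?thesis by simp
      qed
      hence "(\<Sum>k<n. (x k - y k)^2) \<le> (\<Sum>k<n. 1)" by (intro sum_mono) auto
      thus ?thesis using True by simp
    next
      case False
      have "(x k - y k)^2 \<le> x k + y k" if "k < n" for k
      proof -
        have "x k * x k \<le> x k" "y k * y k \<le> y k" "x k * y k \<ge> 0"
          using cx cy that by (auto simp: mult_left_le_one_le)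
        thus ?thesis by (simp add: power2_eq_square algebra_simps)
      qed
      hence "(\<Sum>k<n. (x k - y k)^2) \<le> (\<Sum>k<n. x k + y k)" by (intro sum_mono) auto
      also have "\<dots> \<le> 2" using cx(2) cy(2) by (simp add: sum.distrib)
      finally show ?thesis using False by simp
    qed
  qed
  have "diam_simplex n std_simplex \<le> sqrt (min (real n) 2)"
    unfolding diam_simplex_def diam_n_def
  proof (rule cSup_least)
    show "{dist_n n x y |x y. x \<in> simplex_set n std_simplex \<and> y \<in> simplex_set n std_simplex} \<noteq> {}"
      using vertex_in_simplex_set[of 0 n std_simplex] by blast
  qed (use d in blast)
  hence "(diam_simplex n std_simplex)^2 \<le> (sqrt (min (real n) 2))^2"
    by (rule power_mono) (rule diam_simplex_nonneg)
  thus ?thesis by simp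
qed

lemma subdiv_iter_std_simplex:
  assumes Ss: "subdivision_scheme n S" and Sh: "shrinking_factor n S C"
  shows "V \<in> subdiv_iter S N std_simplex \<Longrightarrow> nondeg_simplex n V \<and> simplex_set n V \<subseteq> simplex_set n std_simplex
          \<and> diam_simplex n V \<le> C ^ N * diam_simplex n std_simplex"
proof (induction N arbitrary: V)
  case 0 thus ?case using nondeg_std_simplex by simp
next
  case (Suc N)
  obtain U where U: "U \<in> subdiv_iter S N std_simplex" "V \<in> S U" using Suc.prems by auto
  have IH: "nondeg_simplex n U" "simplex_set n U \<subseteq> simplex_set n std_simplex"
    "diam_simplex n U \<le> C ^ N * diam_simplex n std_simplex" using Suc.IH[OF U(1)] by auto
  have ndV: "nondeg_simplex n V" using Ss IH(1) U(2) unfolding subdivision_scheme_def by blast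
  have "simplex_set n V \<subseteq> simplex_set n U" using Ss IH(1) U(2) unfolding subdivision_scheme_def by blast
  hence sV: "simplex_set n V \<subseteq> simplex_set n std_simplex" using IH(2) by blast
  have C0: "C \<ge> 0" using Sh by (simp add: shrinking_factor_def)
  have "diam_simplex n V \<le> C * diam_simplex n U" using Sh IH(1) U(2) unfolding shrinking_factor_def by blast
  also have "\<dots> \<le> C * (C ^ N * diam_simplex n std_simplex)" by (rule mult_left_mono[OF IH(3) C0])
  finally show ?case using ndV sV by simp
qed

section \<open>Bounds for the Bernstein coefficients of \<open>f = p/q\<close>\<close>

lemma bernstein_nonneg: "prob_vec n w \<Longrightarrow> bernstein n l \<beta> w \<ge> 0"
  unfolding bernstein_def prob_vec_def
  by (intro mult_nonneg_nonneg divide_nonneg_nonneg prod_nonneg zero_le_power) auto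

lemma sum_bernstein_eq_1:
  assumes "prob_vec n w"
  shows "(\<Sum>\<beta>\<in>multi_idx n l. bernstein n l \<beta> w) = 1"
proof -
  have "(\<Sum>\<beta>\<in>multi_idx n l. bernstein n l \<beta> w) = blossom n (\<lambda>_. 1) (replicate l w)"
    by (simp add: blossom_replicate)
  also have "\<dots> = 1" by (rule blossom_const) (use assms in auto)
  finally show ?thesis .
qed

lemma corner_multi_idx: "i \<le> n \<Longrightarrow> (\<lambda>k. if k = i then l else 0) \<in> multi_idx n l"
  by (auto simp: multi_idx_def sum.delta)

lemma bernstein_sum_ge:
  assumes w: "prob_vec n w" and m: "\<And>\<beta>. \<beta> \<in> multi_idx n l \<Longrightarrow> m \<le> c \<beta>"
  shows "m \<le> (\<Sum>\<beta>\<in>multi_idx n l. c \<beta> * bernstein n l \<beta> w)"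
proof -
  have "m = (\<Sum>\<beta>\<in>multi_idx n l. m * bernstein n l \<beta> w)"
    using sum_bernstein_eq_1[OF w] by (simp flip: sum_distrib_left)
  also have "\<dots> \<le> (\<Sum>\<beta>\<in>multi_idx n l. c \<beta> * bernstein n l \<beta> w)"
    by (intro sum_mono mult_right_mono m bernstein_nonneg[OF w])
  finally show ?thesis .
qed

lemma poly_eq_bernstein_sum:
  assumes V: "nondeg_simplex n V" and p: "is_poly n l p" and x: "in_Rn n x"
  shows "p x = (\<Sum>\<beta>\<in>multi_idx n l. bcoef n p l V \<beta> * bernstein n l \<beta> (bary n V x))"
  using bcoef_expansion(2)[OF V bernstein_rep_poly[OF V p]] x by blast

lemma poly_ge_bcoef_lower_bound:
  assumes V: "nondeg_simplex n V" and p: "is_poly n l p" and x: "x \<in> simplex_set n V"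
    and m: "\<And>\<beta>. \<beta> \<in> multi_idx n l \<Longrightarrow> m \<le> bcoef n p l V \<beta>"
  shows "m \<le> p x"
  unfolding poly_eq_bernstein_sum[OF V p simplex_set_props(1)[OF V x]]
  by (rule bernstein_sum_ge[OF simplex_set_props(2)[OF V x] m])

lemma rat_between_bcoef_rat:
  assumes V: "nondeg_simplex n V" and p: "is_poly n l p" and q: "is_poly n l q"
    and x: "x \<in> simplex_set n V"
    and q_pos: "\<And>\<beta>. \<beta> \<in> multi_idx n l \<Longrightarrow> 0 < bcoef n q l V \<beta>"
    and lo: "\<And>\<beta>. \<beta> \<in> multi_idx n l \<Longrightarrow> lo \<le> bcoef_rat n p q l V \<beta>"
    and hi: "\<And>\<beta>. \<beta> \<in> multi_idx n l \<Longrightarrow> bcoef_rat n p q l V \<beta> \<le> hi"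
  shows "lo \<le> p x / q x" and "p x / q x \<le> hi"
proof -
  let ?cp = "bcoef n p l V" and ?cq = "bcoef n q l V"
  have "0 < Min (?cq ` multi_idx n l)"
    using q_pos corner_multi_idx[of 0 n l] by (subst Min_gr_iff) (auto simp: multi_idx_finite)
  moreover have "Min (?cq ` multi_idx n l) \<le> q x"
    by (rule poly_ge_bcoef_lower_bound[OF V q x]) (simp add: multi_idx_finite)
  ultimately have qx: "0 < q x" by linarith
  note expand = poly_eq_bernstein_sum[OF V _ simplex_set_props(1)[OF V x]]
  have "p x - lo * q x = (\<Sum>\<beta>\<in>multi_idx n l. (?cp \<beta> - lo * ?cq \<beta>) * bernstein n l \<beta> (bary n V x))"
    "hi * q x - p x = (\<Sum>\<beta>\<in>multi_idx n l. (hi * ?cq \<beta> - ?cp \<beta>) * bernstein n l \<beta> (bary n V x))"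
    unfolding expand[OF p] expand[OF q]
    by (simp_all add: left_diff_distrib sum_subtractf sum_distrib_left mult.assoc)
  moreover have "0 \<le> ?cp \<beta> - lo * ?cq \<beta>" "0 \<le> hi * ?cq \<beta> - ?cp \<beta>" if "\<beta> \<in> multi_idx n l" for \<beta>
    using lo[OF that] hi[OF that] q_pos[OF that] by (simp_all add: bcoef_rat_def field_simps)
  ultimately have "0 \<le> p x - lo * q x" "0 \<le> hi * q x - p x"
    using bernstein_sum_ge[OF simplex_set_props(2)[OF V x]] by presburger+
  with qx show "lo \<le> p x / q x" "p x / q x \<le> hi"
    by (simp_all add: field_simps)
qed

lemma rat_bounds_Min_Max_bcoef_rat:
  assumes V: "nondeg_simplex n V" and p: "is_poly n l p" and q: "is_poly n l q"
    and x: "x \<in> simplex_set n V" and q_pos: "\<forall>\<beta>\<in>multi_idx n l. 0 < bcoef n q l V \<beta>"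
  shows "Min (bcoef_rat n p q l V ` multi_idx n l) \<le> p x / q x"
    and "\<bar>p x / q x\<bar> \<le> max \<bar>Min (bcoef_rat n p q l V ` multi_idx n l)\<bar> \<bar>Max (bcoef_rat n p q l V ` multi_idx n l)\<bar>"
proof -
  let ?R = "bcoef_rat n p q l V ` multi_idx n l"
  have "Min ?R \<le> bcoef_rat n p q l V \<beta>" "bcoef_rat n p q l V \<beta> \<le> Max ?R"
    if "\<beta> \<in> multi_idx n l" for \<beta>
    using that by (auto simp: multi_idx_finite)
  then have "Min ?R \<le> p x / q x" "p x / q x \<le> Max ?R"
    using rat_between_bcoef_rat[OF V p q x, of "Min ?R" "Max ?R"] q_pos by blast+
  then show "Min ?R \<le> p x / q x" "\<bar>p x / q x\<bar> \<le> max \<bar>Min ?R\<bar> \<bar>Max ?R\<bar>"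
    by (auto simp: abs_le_iff)
qed

lemma madd3_add_unit: "madd3 \<gamma> (ehat i) (ehat j) = add_unit (add_unit \<gamma> i) j"
  by (auto simp: madd3_def add_unit_def fun_eq_iff)

lemma finite_second_diff_set:
  assumes "finite A"
  shows "finite {F \<gamma> i j | \<gamma> i j. \<gamma> \<in> A \<and> i < j \<and> j \<le> (n::nat)}"
proof (rule finite_subset)
  show "{F \<gamma> i j | \<gamma> i j. \<gamma> \<in> A \<and> i < j \<and> j \<le> n} \<subseteq> (\<lambda>(\<gamma>, i, j). F \<gamma> i j) ` (A \<times> {..n} \<times> {..n})"
  proof
    fix v assume "v \<in> {F \<gamma> i j | \<gamma> i j. \<gamma> \<in> A \<and> i < j \<and> j \<le> n}"
    then obtain \<gamma> i j where "v = F \<gamma> i j" "\<gamma> \<in> A" "i < j" "j \<le> n" by blast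
    then show "v \<in> (\<lambda>(\<gamma>, i, j). F \<gamma> i j) ` (A \<times> {..n} \<times> {..n})"
      by (intro image_eqI[of _ _ "(\<gamma>, i, j)"]) auto
  qed
qed (use assms in auto)

lemma second_diff_uminus: "second_diff n (\<lambda>a b. - M a b) i j = - second_diff n M i j"
  by (simp add: second_diff_def)

lemma second_diff_diff:
  "second_diff n (\<lambda>a b. M a b - u * M' a b) i j = second_diff n M i j - u * second_diff n M' i j"
  by (simp add: second_diff_def algebra_simps)

lemma hess_norm_eq:
  "hess_norm n l p = Max (insert 0
     {\<bar>second_diff n (\<lambda>a b. bcoef n p l std_simplex (add_unit (add_unit \<gamma> a) b)) i j\<bar>
      | \<gamma> i j. \<gamma> \<in> multi_idx n (l - 2) \<and> i < j \<and> j \<le> n})"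
  unfolding hess_norm_def second_diff_def madd3_add_unit ..

lemma hess_norm_nonneg: "0 \<le> hess_norm n l p"
  unfolding hess_norm_eq by (rule Max_ge) (auto intro: finite_second_diff_set multi_idx_finite)

lemma abs_second_diff_le_hess_norm:
  assumes "\<gamma> \<in> multi_idx n (l - 2)" "i < j" "j \<le> n"
  shows "\<bar>second_diff n (\<lambda>a b. bcoef n p l std_simplex (add_unit (add_unit \<gamma> a) b)) i j\<bar> \<le> hess_norm n l p"
  unfolding hess_norm_eq
  by (rule Max_ge) (use assms in \<open>auto intro!: finite_second_diff_set multi_idx_finite\<close>)

lemma semiconvex_if_second_diff_le:
  assumes "\<And>\<gamma> i j. \<gamma> \<in> multi_idx n (l - 2) \<Longrightarrow> i < j \<Longrightarrow> j \<le> n \<Longrightarrow>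
     \<bar>second_diff n (\<lambda>a b. c (add_unit (add_unit \<gamma> a) b)) i j\<bar> \<le> H"
  shows "semiconvex n (H * (real n ^ 2 * (real n + 1) / 2)) c l"
  unfolding semiconvex_def
proof (intro allI impI)
  fix \<gamma> :: midx and d :: "nat \<Rightarrow> real"
  assume "\<forall>i>n. \<gamma> i = 0" "(\<Sum>i\<le>n. \<gamma> i) + 2 = l" and d: "(\<Sum>a\<le>n. d a) = 0"
  then have "\<gamma> \<in> multi_idx n (l - 2)" by (auto simp: multi_idx_def)
  then have "\<bar>\<Sum>a\<le>n. \<Sum>b\<le>n. d a * d b * c (add_unit (add_unit \<gamma> a) b)\<bar>
      \<le> H * (real n ^ 2 * (real n + 1) / 2) * cart_sqnorm n d"
    by (intro abs_quadratic_form_le_second_diff[OF _ d] assms) (simp_all add: add_unit_commute)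
  from abs_le_D2[OF this]
  show "- (H * (real n ^ 2 * (real n + 1) / 2)) * cart_sqnorm n d
      \<le> (\<Sum>a\<le>n. \<Sum>b\<le>n. d a * d b * c (add_unit (add_unit \<gamma> a) b))"
    unfolding minus_mult_left by linarith
qed

lemma abs_blossom_sub_replicate_centroid_le:
  assumes len: "length \<pi>s = l" and prob: "\<forall>\<pi>\<in>set \<pi>s. prob_vec n \<pi>"
    and H: "\<And>\<gamma> i j. \<gamma> \<in> multi_idx n (l - 2) \<Longrightarrow> i < j \<Longrightarrow> j \<le> n \<Longrightarrow>
     \<bar>second_diff n (\<lambda>a b. c (add_unit (add_unit \<gamma> a) b)) i j\<bar> \<le> H"
  shows "\<bar>blossom n c \<pi>s - blossom n c (replicate l (centroid \<pi>s))\<bar>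
    \<le> H * (real n ^ 2 * (real n + 1) / 2) / 2 * scatter n \<pi>s"
proof -
  have "semiconvex n (H * (real n ^ 2 * (real n + 1) / 2)) c l"
    by (rule semiconvex_if_second_diff_le[OF H])
  from blossom_le_replicate_centroid[OF len prob this]
  have "blossom n c \<pi>s - blossom n c (replicate l (centroid \<pi>s))
      \<le> H * (real n ^ 2 * (real n + 1) / 2) / 2 * scatter n \<pi>s" by simp
  moreover have "semiconvex n (H * (real n ^ 2 * (real n + 1) / 2)) (\<lambda>\<beta>. - c \<beta>) l"
    by (rule semiconvex_if_second_diff_le) (simp add: second_diff_uminus H)
  from blossom_le_replicate_centroid[OF len prob this]
  have "blossom n c (replicate l (centroid \<pi>s)) - blossom n c \<pi>s
      \<le> H * (real n ^ 2 * (real n + 1) / 2) / 2 * scatter n \<pi>s" by (simp add: blossom_uminus)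
  ultimately show ?thesis by (intro abs_leI) linarith+
qed

lemma scatter_blossom_args_le:
  assumes V: "nondeg_simplex n V" and \<alpha>: "\<alpha> \<in> multi_idx n l"
  shows "scatter n (blossom_args n (\<lambda>i. bary n std_simplex (V i)) \<alpha>) \<le> real l / 2 * diam_simplex n V ^ 2"
proof (cases "l = 0")
  case True
  then have "blossom_args n (\<lambda>i. bary n std_simplex (V i)) \<alpha> = []"
    using \<alpha> length_blossom_args[of n _ \<alpha>] by (simp add: multi_idx_def)
  then show ?thesis by (simp add: scatter_def)
next
  case False
  define \<mu> where "\<mu> = (\<lambda>i. bary n std_simplex (V i))"
  have "scatter n (blossom_args n \<mu> \<alpha>)
      = (\<Sum>a\<in>{1..n}. \<Sum>i\<le>n. real (\<alpha> i) * (\<mu> i a - (\<Sum>j\<le>n. real (\<alpha> j) * \<mu> j a) / real l)^2)"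
    unfolding scatter_coordwise sum_list_blossom_args centroid_blossom_args[OF \<alpha>]
    by (simp add: sum_divide_distrib)
  also have "\<dots> \<le> real l / 2 * diam_simplex n V ^ 2"
  proof (rule weighted_variance_le)
    show "(\<Sum>i\<le>n. real (\<alpha> i)) = real l" using \<alpha> by (simp add: multi_idx_def flip: of_nat_sum)
    fix i j assume ij: "i \<in> {..n}" "j \<in> {..n}"
    have "in_Rn n (V i)" "in_Rn n (V j)" using V ij by (auto simp: nondeg_simplex_def)
    then have "(\<Sum>a\<in>{1..n}. (\<mu> i a - \<mu> j a)^2) = (\<Sum>a\<in>{1..n}. (V i (a - 1) - V j (a - 1))^2)"
      by (intro sum.cong) (auto simp: \<mu>_def bary_std_simplex std_bary_def)
    also have "\<dots> = (\<Sum>k<n. (V i k - V j k)^2)"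
      by (rule sum.reindex_bij_witness[where i = "\<lambda>k. k + 1" and j = "\<lambda>a. a - 1"]) auto
    also have "\<dots> = (dist_n n (V i) (V j))^2" by (simp add: dist_n_def sum_nonneg)
    also have "\<dots> \<le> diam_simplex n V ^ 2"
      by (rule power_mono[OF dist_n_le_diam_simplex])
         (use ij in \<open>auto intro!: vertex_in_simplex_set sum_nonneg simp: dist_n_def\<close>)
    finally show "(\<Sum>a\<in>{1..n}. (\<mu> i a - \<mu> j a)^2) \<le> diam_simplex n V ^ 2" .
  qed (use False in auto)
  finally show ?thesis by (simp add: \<mu>_def)
qed

text \<open>For \<open>l = 0\<close> the argument list is empty, so any point of \<open>V\<close> will do.\<close>

lemma blossom_args_centroid_point:
  assumes V: "nondeg_simplex n V" and \<alpha>: "\<alpha> \<in> multi_idx n l"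
  obtains y where "y \<in> simplex_set n V"
    and "\<And>c. blossom n c (replicate l (centroid (blossom_args n (\<lambda>i. bary n std_simplex (V i)) \<alpha>)))
             = blossom n c (replicate l (bary n std_simplex y))"
proof (cases "l = 0")
  case True
  show ?thesis by (rule that[of "V 0"]) (use True in \<open>auto intro: vertex_in_simplex_set\<close>)
next
  case False
  define y where "y = (\<lambda>k. \<Sum>i\<le>n. (real (\<alpha> i) / real l) * V i k)"
  have w: "(\<Sum>i\<le>n. real (\<alpha> i) / real l) = 1"
    using \<alpha> False by (simp add: multi_idx_def sum_divide_distrib[symmetric] flip: of_nat_sum)
  have "y \<in> simplex_set n V"
    unfolding simplex_set_def y_def using w by (intro CollectI exI[of _ "\<lambda>i. real (\<alpha> i) / real l"]) auto
  moreover have "centroid (blossom_args n (\<lambda>i. bary n std_simplex (V i)) \<alpha>) = bary n std_simplex y"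
    unfolding centroid_blossom_args[OF \<alpha>] y_def
    by (rule bary_affine_comb[OF nondeg_std_simplex _ w, symmetric]) (use V in \<open>auto simp: nondeg_simplex_def\<close>)
  ultimately show ?thesis using that by simp
qed

lemma abs_second_diff_bcoef_comb_le:
  assumes "\<gamma> \<in> multi_idx n (l - 2)" "i < j" "j \<le> n" and \<phi>: "\<bar>\<phi>\<bar> \<le> \<zeta>"
  shows "\<bar>second_diff n (\<lambda>a b. bcoef n p l std_simplex (add_unit (add_unit \<gamma> a) b)
             - \<phi> * bcoef n q l std_simplex (add_unit (add_unit \<gamma> a) b)) i j\<bar>
    \<le> hess_norm n l p + \<zeta> * hess_norm n l q"
proof -
  let ?D = "\<lambda>c. second_diff n (\<lambda>a b. c (add_unit (add_unit \<gamma> a) b)) i j"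
  have Dp: "\<bar>?D (bcoef n p l std_simplex)\<bar> \<le> hess_norm n l p"
    and Dq: "\<bar>?D (bcoef n q l std_simplex)\<bar> \<le> hess_norm n l q"
    by (rule abs_second_diff_le_hess_norm[OF assms(1-3)])+
  have "\<bar>\<phi>\<bar> * \<bar>?D (bcoef n q l std_simplex)\<bar> \<le> \<zeta> * hess_norm n l q"
    using \<phi> Dq order_trans[OF abs_ge_zero \<phi>] by (intro mult_mono) auto
  moreover have "\<bar>?D (bcoef n p l std_simplex) - \<phi> * ?D (bcoef n q l std_simplex)\<bar>
      \<le> \<bar>?D (bcoef n p l std_simplex)\<bar> + \<bar>\<phi>\<bar> * \<bar>?D (bcoef n q l std_simplex)\<bar>"
    by (metis abs_mult abs_triangle_ineq4)
  ultimately show ?thesis using Dp by (simp add: second_diff_diff)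
qed

lemma sub_div_le_add_div:
  fixes \<phi> g Q E m :: real
  assumes "\<bar>g\<bar> \<le> E" "0 < m" "m \<le> Q"
  shows "\<phi> - E / m \<le> (\<phi> * Q + g) / Q"
proof -
  have "\<bar>g / Q\<bar> = \<bar>g\<bar> / Q" using assms by simp
  also have "\<dots> \<le> E / m" using assms abs_ge_zero[of g] by (intro frac_le) linarith+
  finally have "- (E / m) \<le> g / Q" using abs_ge_minus_self[of "g / Q"] by linarith
  moreover have "(\<phi> * Q + g) / Q = \<phi> + g / Q" using assms by (simp add: field_simps)
  ultimately show ?thesis by linarith
qed

lemma bcoef_rat_ge:
  assumes V: "nondeg_simplex n V" and sub: "simplex_set n V \<subseteq> simplex_set n std_simplex"
    and \<alpha>: "\<alpha> \<in> multi_idx n l" and p: "is_poly n l p" and q: "is_poly n l q"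
    and mq: "0 < mq" "\<And>\<beta>. \<beta> \<in> multi_idx n l \<Longrightarrow> mq \<le> bcoef n q l std_simplex \<beta>"
    and \<zeta>: "\<And>y. y \<in> simplex_set n std_simplex \<Longrightarrow> \<bar>p y / q y\<bar> \<le> \<zeta>"
  obtains y where "y \<in> simplex_set n std_simplex"
    and "p y / q y - (hess_norm n l p + \<zeta> * hess_norm n l q) * (real n ^ 2 * (real n + 1))
           * real l * diam_simplex n V ^ 2 / (8 * mq) \<le> bcoef_rat n p q l V \<alpha>"
proof -
  define cp where "cp = bcoef n p l std_simplex"
  define cq where "cq = bcoef n q l std_simplex"
  define L where "L = blossom_args n (\<lambda>i. bary n std_simplex (V i)) \<alpha>"
  define H where "H = hess_norm n l p + \<zeta> * hess_norm n l q"
  define E where "E = H * (real n ^ 2 * (real n + 1)) * real l * diam_simplex n V ^ 2 / (8 * mq)"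
  obtain y where yV: "y \<in> simplex_set n V"
    and y: "\<And>c. blossom n c (replicate l (centroid L)) = blossom n c (replicate l (bary n std_simplex y))"
    using blossom_args_centroid_point[OF V \<alpha>] unfolding L_def by blast
  have yD: "y \<in> simplex_set n std_simplex" using yV sub by blast
  define \<phi> where "\<phi> = p y / q y"
  have qy: "0 < q y"
    using poly_ge_bcoef_lower_bound[OF nondeg_std_simplex q yD mq(2)] mq(1) by linarith
  have H0: "0 \<le> H"
    unfolding H_def using order_trans[OF abs_ge_zero \<zeta>[OF yD]] by (simp add: hess_norm_nonneg)
  have lenL: "length L = l" using \<alpha> by (simp add: L_def length_blossom_args multi_idx_def)
  have probL: "\<forall>\<pi>\<in>set L. prob_vec n \<pi>"
    using set_blossom_args sub vertex_in_simplex_set simplex_set_props(2)[OF nondeg_std_simplex]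
    unfolding L_def by blast
  define cg where "cg = (\<lambda>\<beta>. cp \<beta> - \<phi> * cq \<beta>)"
  have split: "blossom n cp L = \<phi> * blossom n cq L + blossom n cg L"
    unfolding cg_def using blossom_linear[of n 1 cp "-\<phi>" cq L] by simp
  note expand = poly_eq_bernstein_sum[OF nondeg_std_simplex _ simplex_set_props(1)[OF nondeg_std_simplex yD]]
  have "blossom n cg (replicate l (centroid L)) = blossom n cg (replicate l (bary n std_simplex y))"
    by (rule y)
  also have "\<dots> = p y - \<phi> * q y"
    unfolding blossom_replicate cg_def cp_def cq_def expand[OF p] expand[OF q]
    by (simp add: left_diff_distrib sum_subtractf sum_distrib_left mult.assoc)
  also have "\<dots> = 0" using qy by (simp add: \<phi>_def)
  finally have centre: "blossom n cg (replicate l (centroid L)) = 0" .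
  have "\<bar>second_diff n (\<lambda>a b. cg (add_unit (add_unit \<gamma> a) b)) i j\<bar> \<le> H"
    if "\<gamma> \<in> multi_idx n (l - 2)" "i < j" "j \<le> n" for \<gamma> i j
    using abs_second_diff_bcoef_comb_le[OF that \<zeta>[OF yD, folded \<phi>_def]]
    unfolding cg_def cp_def cq_def H_def .
  from abs_blossom_sub_replicate_centroid_le[OF lenL probL this]
  have "\<bar>blossom n cg L\<bar> \<le> H * (real n ^ 2 * (real n + 1) / 2) / 2 * scatter n L"
    unfolding centre by simp
  also have "\<dots> \<le> H * (real n ^ 2 * (real n + 1) / 2) / 2 * (real l / 2 * diam_simplex n V ^ 2)"
    using scatter_blossom_args_le[OF V \<alpha>] H0 unfolding L_def by (intro mult_left_mono) auto
  finally have dev: "\<bar>blossom n cg L\<bar> \<le> E * mq" using mq(1) by (simp add: E_def)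
  have "blossom n (\<lambda>_. mq) L \<le> blossom n cq L"
    by (rule blossom_mono[OF probL]) (use mq(2) lenL in \<open>auto simp: cq_def\<close>)
  then have qL: "mq \<le> blossom n cq L" using blossom_const[OF probL] by simp
  have "bcoef_rat n p q l V \<alpha> = (\<phi> * blossom n cq L + blossom n cg L) / blossom n cq L"
    using bcoef_eq_blossom[OF V p] bcoef_eq_blossom[OF V q] \<alpha> split
    by (simp add: bcoef_rat_def cp_def cq_def L_def)
  with sub_div_le_add_div[OF dev mq(1) qL, of \<phi>] mq(1) have "\<phi> - E \<le> bcoef_rat n p q l V \<alpha>"
    by simp
  then show ?thesis unfolding E_def H_def \<phi>_def by (rule that[OF yD])
qed

lemma subdiv_iter_diam_sq_le:
  assumes "subdivision_scheme n S" "shrinking_factor n S C" "V \<in> subdiv_iter S N std_simplex"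
  shows "diam_simplex n V ^ 2 \<le> C ^ (2 * N) * min (real n) 2"
proof -
  have "0 \<le> C" using assms(2) by (simp add: shrinking_factor_def)
  have "diam_simplex n V ^ 2 \<le> (C ^ N * diam_simplex n std_simplex) ^ 2"
    using subdiv_iter_std_simplex[OF assms] by (intro power_mono) (auto simp: diam_simplex_nonneg)
  also have "\<dots> = C ^ (2 * N) * diam_simplex n std_simplex ^ 2"
    by (simp add: power_mult_distrib power_mult[symmetric] mult.commute)
  also have "\<dots> \<le> C ^ (2 * N) * min (real n) 2"
    using diam_std_simplex_sq_le \<open>0 \<le> C\<close> by (intro mult_left_mono) auto
  finally show ?thesis .
qed

lemma dimension_factor_le:
  "36 * min (real n) 2 * (real n ^ 2 * (real n + 1))
     \<le> real n ^ 2 * real (n + 1) * real (n + 2) ^ 2 * real (n + 3)"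
proof -
  consider "n = 0" | "n = 1" | "n \<ge> 2" by linarith
  then show ?thesis
  proof cases
    case 3
    have "(16::real) * 5 \<le> real (n + 2) ^ 2 * real (n + 3)"
      using 3 power_mono[of 4 "real (n + 2)" 2] by (intro mult_mono) auto
    then have "72 * (real n ^ 2 * (real n + 1)) \<le> (real (n + 2) ^ 2 * real (n + 3)) * (real n ^ 2 * (real n + 1))"
      by (intro mult_right_mono) auto
    then show ?thesis using 3 by (simp add: algebra_simps)
  qed simp_all
qed

lemma error_le_omega:
  fixes H mq C :: real
  assumes "0 \<le> H" "0 < mq" "0 \<le> C" "D ^ 2 \<le> C ^ (2 * N) * min (real n) 2"
  shows "H * (real n ^ 2 * (real n + 1)) * real l * D ^ 2 / (8 * mq)
    \<le> 2 * (real l * (real n ^ 2 * real (n + 1) * real (n + 2) ^ 2 * real (n + 3)) / (576 * mq) * H) * C ^ (2 * N)"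
proof -
  have "H * real l * (real n ^ 2 * (real n + 1)) * D ^ 2
      \<le> H * real l * (real n ^ 2 * (real n + 1)) * (C ^ (2 * N) * min (real n) 2)"
    using assms by (intro mult_left_mono) auto
  also have "\<dots> = H * real l * C ^ (2 * N) * (36 * min (real n) 2 * (real n ^ 2 * (real n + 1))) / 36"
    by simp
  also have "\<dots> \<le> H * real l * C ^ (2 * N) * (real n ^ 2 * real (n + 1) * real (n + 2) ^ 2 * real (n + 3)) / 36"
    using assms by (intro divide_right_mono mult_left_mono dimension_factor_le) auto
  finally have "H * real l * (real n ^ 2 * (real n + 1)) * D ^ 2 / (8 * mq)
      \<le> H * real l * C ^ (2 * N) * (real n ^ 2 * real (n + 1) * real (n + 2) ^ 2 * real (n + 3)) / 36 / (8 * mq)"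
    using assms(2) by (intro divide_right_mono) auto
  then show ?thesis using assms(2) by (simp add: field_simps)
qed

lemma power_lt_of_inverse_power_gt:
  fixes C w f :: real
  assumes "sqrt (2 * w) / sqrt f < 1 / C ^ N" "0 < f" "0 \<le> w" "0 < C"
  shows "2 * w * C ^ (2 * N) < f"
proof -
  have "sqrt (2 * w) * C ^ N < sqrt f"
    using assms by (simp add: field_simps)
  moreover have "0 \<le> sqrt (2 * w) * C ^ N" using assms by simp
  ultimately have "(sqrt (2 * w) * C ^ N)^2 < (sqrt f)^2" by (rule power_strict_mono) simp
  then show ?thesis using assms by (simp add: power_mult_distrib power_mult[symmetric] mult.commute)
qed

theorem proposition5p8:
  fixes n l N :: nat and p q :: "pt \<Rightarrow> real" and S :: "smplx \<Rightarrow> smplx set"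
    and C fmin :: real
  assumes poly_p: "is_poly n l p" and poly_q: "is_poly n l q"
    and fmin_def: "fmin = (INF x\<in>simplex_set n std_simplex. p x / q x)"
    and fmin_pos: "fmin > 0"
    and q_pos_std: "\<forall>\<alpha>\<in>multi_idx n l. bcoef n q l std_simplex \<alpha> > 0"
    and q_pos_sub: "\<forall>V\<in>subdiv_iter S N std_simplex. \<forall>\<alpha>\<in>multi_idx n l. bcoef n q l V \<alpha> > 0"
    and S_scheme: "subdivision_scheme n S"
    and S_shrink: "shrinking_factor n S C"
    and N_big: "1 / C ^ N > sqrt (2 * omega' n l p q) / sqrt fmin"
  shows "\<forall>V\<in>subdiv_iter S N std_simplex.
           (\<forall>\<alpha>\<in>multi_idx n l. bcoef_rat n p q l V \<alpha> \<ge> 0) \<and>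
           (\<forall>i\<le>n. bcoef_rat n p q l V (\<lambda>k. if k = i then l else 0) > 0)"
proof -
  define mq where "mq = Min (bcoef n q l std_simplex ` multi_idx n l)"
  define R where "R = bcoef_rat n p q l std_simplex ` multi_idx n l"
  define H where "H = hess_norm n l p + max \<bar>Min R\<bar> \<bar>Max R\<bar> * hess_norm n l q"
  have mq: "0 < mq" "\<And>\<beta>. \<beta> \<in> multi_idx n l \<Longrightarrow> mq \<le> bcoef n q l std_simplex \<beta>"
    using q_pos_std corner_multi_idx[of 0 n l] unfolding mq_def
    by (subst Min_gr_iff) (auto simp: multi_idx_finite)
  note bounds = rat_bounds_Min_Max_bcoef_rat[OF nondeg_std_simplex poly_p poly_q _ q_pos_std, folded R_def]
  have fmin_le: "fmin \<le> p x / q x" if "x \<in> simplex_set n std_simplex" for x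
    unfolding fmin_def by (rule cINF_lower[OF bdd_belowI[of _ "Min R"] that]) (use bounds in auto)
  have \<omega>: "omega' n l p q = real l * (real n ^ 2 * real (n + 1) * real (n + 2) ^ 2 * real (n + 3)) / (576 * mq) * H"
    unfolding omega'_def Let_def H_def R_def mq_def ..
  have C0: "0 < C" using S_shrink by (simp add: shrinking_factor_def)
  have H0: "0 \<le> H" by (simp add: H_def hess_norm_nonneg)
  have small: "2 * omega' n l p q * C ^ (2 * N) < fmin"
    by (rule power_lt_of_inverse_power_gt[OF N_big fmin_pos _ C0]) (use H0 mq in \<open>simp add: \<omega>\<close>)
  have "0 < bcoef_rat n p q l V \<alpha>" if V: "V \<in> subdiv_iter S N std_simplex" and \<alpha>: "\<alpha> \<in> multi_idx n l" for V \<alpha>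
  proof -
    obtain y where y: "y \<in> simplex_set n std_simplex"
      "p y / q y - H * (real n ^ 2 * (real n + 1)) * real l * diam_simplex n V ^ 2 / (8 * mq)
         \<le> bcoef_rat n p q l V \<alpha>"
      using bcoef_rat_ge[OF _ _ \<alpha> poly_p poly_q mq bounds(2)] subdiv_iter_std_simplex[OF S_scheme S_shrink V]
      unfolding H_def by blast
    have "H * (real n ^ 2 * (real n + 1)) * real l * diam_simplex n V ^ 2 / (8 * mq)
        \<le> 2 * omega' n l p q * C ^ (2 * N)"
      unfolding \<omega> using H0 mq(1) C0 subdiv_iter_diam_sq_le[OF S_scheme S_shrink V]
      by (intro error_le_omega) auto
    then show ?thesis using y fmin_le[OF y(1)] small by linarith
  qed
  then show ?thesis using corner_multi_idx by (auto intro: less_imp_le)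
qed

end
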